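(* Let $\Lambda\in P^+$ and let $\beta=\alpha_{j_1}+\dots+\alpha_{j_n}$ with $j_1,\dots,j_n\in I$ pairwise distinct. Then the center $\mathcal{Z}$ of $R^\Lambda(\beta)$ satisfies $\mathcal{Z}\subseteq\bigoplus_{\mu\in I^\beta}\mathcal{P}_\mu e(\mu)$, where $\mathcal{P}_\mu e(\mu)$ denotes the $\mathbf{k}$-span in $R^\Lambda(\beta)$ of all elements $x_1^{t_1}\cdots x_n^{t_n}e(\mu)$, $t_i\in\mathbb{Z}_{\ge0}$.
   Context: Fix a field $\mathbf{k}$ of characteristic $\neq 2$. A Cartan superdatum consists of an index set $I$; a symmetrizable generalized Cartan matrix $A=(a_{ij})_{i,j\in I}$ ($a_{ii}=2$, $a_{ij}\le 0$ for $i\ne j$, $a_{ij}=0\iff a_{ji}=0$, positive integers $d_i$ with $d_ia_{ij}=d_ja_{ji}$); a free abelian group $P$; $\mathbb{Z}$-linearly independent $\alpha_i\in P$; $h_i\in\mathrm{Hom}_{\mathbb{Z}}(P,\mathbb{Z})$ with $\langle h_i,\alpha_j\rangle=a_{ij}$; and $I=I_{\mathrm{even}}\sqcup I_{\mathrm{odd}}$ with $a_{ij}\in2\mathbb{Z}$ whenever $i\in I_{\mathrm{odd}}$. A symmetric bilinear form $(\cdot|\cdot)$ on $P$ satisfies $(\alpha_i|\lambda)=d_i\langle h_i,\lambda\rangle$. Parity $\mathrm{p}(i)=1$ if $i\in I_{\mathrm{odd}}$, $0$ otherwise. $P^+=\{\Lambda:\langle h_i,\Lambda\rangle\ge0\ \forall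 i\}$; $I^\beta=\{\nu\in I^n:\sum_s\alpha_{\nu_s}=\beta\}$. For $\nu\in I^n$, $\mathcal{P}_\nu=\mathbf{k}\langle\mathrm{x}_1,\dots,\mathrm{x}_n\rangle/(\mathrm{x}_a\mathrm{x}_b-(-1)^{\mathrm{p}(\nu_a)\mathrm{p}(\nu_b)}\mathrm{x}_b\mathrm{x}_a)$. Fix $Q_{ij}(\mathrm{x}_1,\mathrm{x}_2)=\sum_{r,s}t_{i,j;(r,s)}\mathrm{x}_1^r\mathrm{x}_2^s\in\mathcal{P}_{(i,j)}$ with: $t_{i,j;(r,s)}\ne0$ only if $-2(\alpha_i|\alpha_j)-r(\alpha_i|\alpha_i)-s(\alpha_j|\alpha_j)=0$; $t_{i,j;(r,s)}=t_{j,i;(s,r)}$; $t_{i,j;(-a_{ij},0)}\in\mathbf{k}^\times$; $t_{i,j;(r,s)}=0$ if $i=j$ or ($i\in I_{\mathrm{odd}}$ and $r$ odd). $R(\beta)$ is the $\mathbf{k}$-algebra with generators $e(\nu)$ ($\nu\in I^\beta$), $x_1,\dots,x_n$, $\tau_1,\dots,\tau_{n-1}$ and relations: $e(\mu)e(\nu)=\delta_{\mu\nu}e(\nu)$, $\sum_\nu e(\nu)=1$; $x_px_qe(\nu)=(-1)^{\mathrm{p}(\nu_p)\mathrm{p}(\nu_q)}x_qx_pe(\nu)$ ($p\ne q$); $x_pe(\nu)=e(\nu)x_p$; $\tau_ae(\nu)=e(s_a\nu)\tau_a$; $\tau_ax_pe(\nu)=(-1)^{\mathrm{p}(\nu_p)\mathrm{p}(\nu_a)\mathrm{p}(\nu_{a+1})}x_p\tau_ae(\nu)$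 ($p\ne a,a+1$); $(\tau_ax_{a+1}-(-1)^{\mathrm{p}(\nu_a)\mathrm{p}(\nu_{a+1})}x_a\tau_a)e(\nu)=(x_{a+1}\tau_a-(-1)^{\mathrm{p}(\nu_a)\mathrm{p}(\nu_{a+1})}\tau_ax_a)e(\nu)=\delta_{\nu_a,\nu_{a+1}}e(\nu)$; $\tau_a^2e(\nu)=Q_{\nu_a,\nu_{a+1}}(x_a,x_{a+1})e(\nu)$; $\tau_a\tau_be(\nu)=(-1)^{\mathrm{p}(\nu_a)\mathrm{p}(\nu_{a+1})\mathrm{p}(\nu_b)\mathrm{p}(\nu_{b+1})}\tau_b\tau_ae(\nu)$ ($|a-b|>1$); $(\tau_{a+1}\tau_a\tau_{a+1}-\tau_a\tau_{a+1}\tau_a)e(\nu)$ equals $\frac{Q_{\nu_a,\nu_{a+1}}(x_{a+2},x_{a+1})-Q_{\nu_a,\nu_{a+1}}(x_a,x_{a+1})}{x_{a+2}-x_a}e(\nu)$ if $\nu_a=\nu_{a+2}\in I_{\mathrm{even}}$, $(-1)^{\mathrm{p}(\nu_{a+1})}(x_{a+2}-x_a)\frac{Q_{\nu_a,\nu_{a+1}}(x_{a+2},x_{a+1})-Q_{\nu_a,\nu_{a+1}}(x_a,x_{a+1})}{x_{a+2}^2-x_a^2}e(\nu)$ if $\nu_a=\nu_{a+2}\in I_{\mathrm{odd}}$, $0$ otherwise; $s_a=(a,a+1)$, and $\mathfrak{S}_n$ acts on $I^n$ by $(w\nu)_j=\nu_{w^{-1}(j)}$. For $\Lambda\in P^+$,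 $R^\Lambda(\beta)=R(\beta)/\langle\sum_{\nu}x_1^{\langle h_{\nu_1},\Lambda\rangle}e(\nu)\rangle$. *)

theory Defs
  imports Main
begin

text \<open>Generators of the free algebra: idempotents E nu, dots X p, crossings T a
  (positions are 1-based, as in the paper).\<close>
datatype 'i gen = E "'i list" | X nat | T nat

text \<open>Elements of the free associative algebra: functions from words to scalars
  (the genuine free algebra consists of the finitely supported ones).\<close>
type_synonym ('i, 'k) fa = "'i gen list \<Rightarrow> 'k"

definition fin_supp :: "('i, 'k::zero) fa \<Rightarrow> bool" where
  "fin_supp f \<longleftrightarrow> finite {w. f w \<noteq> 0}"

definition fa_word :: "'i gen list \<Rightarrow> ('i, 'k::{zero,one}) fa" where
  "fa_word w = (\<lambda>v. if v = w then 1 else 0)"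

definition fa_zero :: "('i, 'k::zero) fa" where
  "fa_zero = (\<lambda>_. 0)"

definition fa_add :: "('i, 'k::plus) fa \<Rightarrow> ('i, 'k) fa \<Rightarrow> ('i, 'k) fa" where
  "fa_add f g = (\<lambda>w. f w + g w)"

definition fa_sub :: "('i, 'k::minus) fa \<Rightarrow> ('i, 'k) fa \<Rightarrow> ('i, 'k) fa" where
  "fa_sub f g = (\<lambda>w. f w - g w)"

definition fa_smul :: "'k::times \<Rightarrow> ('i, 'k) fa \<Rightarrow> ('i, 'k) fa" where
  "fa_smul c f = (\<lambda>w. c * f w)"

definition fa_mul :: "('i, 'k::comm_semiring_1) fa \<Rightarrow> ('i, 'k) fa \<Rightarrow> ('i, 'k) fa" where
  "fa_mul f g = (\<lambda>w. \<Sum>k\<le>length w. f (take k w) * g (drop k w))"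

definition fa_sum :: "'a set \<Rightarrow> ('a \<Rightarrow> ('i, 'k::comm_monoid_add) fa) \<Rightarrow> ('i, 'k) fa" where
  "fa_sum A F = (\<lambda>w. \<Sum>x\<in>A. F x w)"

inductive_set ideal_gen :: "('i, 'k::comm_ring_1) fa set \<Rightarrow> ('i, 'k) fa set"
  for Rs :: "('i, 'k) fa set" where
  base: "r \<in> Rs \<Longrightarrow> r \<in> ideal_gen Rs"
| zero: "fa_zero \<in> ideal_gen Rs"
| add: "a \<in> ideal_gen Rs \<Longrightarrow> b \<in> ideal_gen Rs \<Longrightarrow> fa_add a b \<in> ideal_gen Rs"
| smul: "a \<in> ideal_gen Rs \<Longrightarrow> fa_smul c a \<in> ideal_gen Rs"
| mul: "a \<in> ideal_gen Rs \<Longrightarrow> fin_supp u \<Longrightarrow> fin_supp v \<Longrightarrow>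
        fa_mul (fa_mul u a) v \<in> ideal_gen Rs"

definition sg :: "bool \<Rightarrow> 'k::ring_1" where
  "sg b = (if b then -1 else 1)"

definition at :: "'i list \<Rightarrow> nat \<Rightarrow> 'i" where
  "at \<nu> a = \<nu> ! (a - 1)"

definition swp :: "nat \<Rightarrow> 'i list \<Rightarrow> 'i list" where
  "swp a \<nu> = \<nu>[a - 1 := \<nu> ! a, a := \<nu> ! (a - 1)]"

text \<open>Q_{i,j}(x_p, x_q) e(nu).\<close>
definition Qe :: "('i \<Rightarrow> 'i \<Rightarrow> nat \<Rightarrow> nat \<Rightarrow> 'k::comm_ring_1) \<Rightarrow> 'i \<Rightarrow> 'i \<Rightarrow> nat \<Rightarrow> nat
     \<Rightarrow> 'i list \<Rightarrow> ('i, 'k) fa" where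
  "Qe t i j p q \<nu> = fa_sum {(r, s). t i j r s \<noteq> 0}
     (\<lambda>(r, s). fa_smul (t i j r s) (fa_word (replicate r (X p) @ replicate s (X q) @ [E \<nu>])))"

text \<open>Even case: (Q(x_{a+2},x_{a+1}) - Q(x_a,x_{a+1}))/(x_{a+2}-x_a) e(nu), written out
  via (X^r - Y^r)/(X - Y) = sum_{k<r} X^k Y^(r-1-k).\<close>
definition braid_even :: "('i \<Rightarrow> 'i \<Rightarrow> nat \<Rightarrow> nat \<Rightarrow> 'k::comm_ring_1) \<Rightarrow> 'i \<Rightarrow> 'i \<Rightarrow> nat
     \<Rightarrow> 'i list \<Rightarrow> ('i, 'k) fa" where
  "braid_even t i j a \<nu> = fa_sum {(r, s). t i j r s \<noteq> 0}
     (\<lambda>(r, s). fa_smul (t i j r s) (fa_sum {..<r} (\<lambda>k.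
        fa_word (replicate k (X (a + 2)) @ replicate (r - 1 - k) (X a)
                 @ replicate s (X (a + 1)) @ [E \<nu>]))))"

text \<open>Odd case: (x_{a+2}-x_a)(Q(x_{a+2},x_{a+1}) - Q(x_a,x_{a+1}))/(x_{a+2}^2-x_a^2) e(nu)
  (without the sign), using that only even r occur, and
  (X^(2m) - Y^(2m))/(X^2 - Y^2) = sum_{k<m} X^(2k) Y^(2(m-1-k)).\<close>
definition braid_odd :: "('i \<Rightarrow> 'i \<Rightarrow> nat \<Rightarrow> nat \<Rightarrow> 'k::comm_ring_1) \<Rightarrow> 'i \<Rightarrow> 'i \<Rightarrow> nat
     \<Rightarrow> 'i list \<Rightarrow> ('i, 'k) fa" where
  "braid_odd t i j a \<nu> = fa_sum {(r, s). t i j r s \<noteq> 0}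
     (\<lambda>(r, s). fa_smul (t i j r s) (fa_sum {..<r div 2} (\<lambda>k.
        let w = replicate (2 * k) (X (a + 2)) @ replicate (r - 2 - 2 * k) (X a)
                 @ replicate s (X (a + 1)) @ [E \<nu>]
        in fa_sub (fa_word (X (a + 2) # w)) (fa_word (X a # w)))))"

text \<open>Defining relations of the cyclotomic quiver Hecke superalgebra R^Lambda(beta),
  with n = height, Ib = I^beta, lam i = <h_i, Lambda>.  Generators E nu with nu not in
  I^beta, X p with p not in 1..n, T a with a not in 1..n-1 are set to zero (they do
  not exist in the paper's presentation).\<close>
definition cyc_rels :: "('i \<Rightarrow> bool) \<Rightarrow> ('i \<Rightarrow> 'i \<Rightarrow> nat \<Rightarrow> nat \<Rightarrow> 'k::comm_ring_1) \<Rightarrow> nat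
     \<Rightarrow> 'i list set \<Rightarrow> ('i \<Rightarrow> nat) \<Rightarrow> ('i, 'k) fa set" where
  "cyc_rels podd t n Ib lam =
     {fa_sub (fa_word [E \<mu>, E \<nu>]) (if \<mu> = \<nu> then fa_word [E \<nu>] else fa_zero) | \<mu> \<nu>.
        \<mu> \<in> Ib \<and> \<nu> \<in> Ib}
   \<union> {fa_sub (fa_sum Ib (\<lambda>\<nu>. fa_word [E \<nu>])) (fa_word [])}
   \<union> {fa_sub (fa_word [X p, X q, E \<nu>])
        (fa_smul (sg (podd (at \<nu> p) \<and> podd (at \<nu> q))) (fa_word [X q, X p, E \<nu>])) | p q \<nu>.
        \<nu> \<in> Ib \<and> p \<in> {1..n} \<and> q \<in> {1..n} \<and> p \<noteq> q}
   \<union> {fa_sub (fa_word [X p, E \<nu>]) (fa_word [E \<nu>, X p]) | p \<nu>. \<nu> \<in> Ib \<and> p \<in> {1..n}}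
   \<union> {fa_sub (fa_word [T a, E \<nu>]) (fa_word [E (swp a \<nu>), T a]) | a \<nu>.
        \<nu> \<in> Ib \<and> 1 \<le> a \<and> a + 1 \<le> n}
   \<union> {fa_sub (fa_word [T a, X p, E \<nu>])
        (fa_smul (sg (podd (at \<nu> p) \<and> podd (at \<nu> a) \<and> podd (at \<nu> (a + 1))))
           (fa_word [X p, T a, E \<nu>])) | a p \<nu>.
        \<nu> \<in> Ib \<and> 1 \<le> a \<and> a + 1 \<le> n \<and> p \<in> {1..n} \<and> p \<noteq> a \<and> p \<noteq> a + 1}
   \<union> {fa_sub (fa_sub (fa_word [T a, X (a + 1), E \<nu>])
        (fa_smul (sg (podd (at \<nu> a) \<and> podd (at \<nu> (a + 1)))) (fa_word [X a, T a, E \<nu>])))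
        (if at \<nu> a = at \<nu> (a + 1) then fa_word [E \<nu>] else fa_zero) | a \<nu>.
        \<nu> \<in> Ib \<and> 1 \<le> a \<and> a + 1 \<le> n}
   \<union> {fa_sub (fa_sub (fa_word [X (a + 1), T a, E \<nu>])
        (fa_smul (sg (podd (at \<nu> a) \<and> podd (at \<nu> (a + 1)))) (fa_word [T a, X a, E \<nu>])))
        (if at \<nu> a = at \<nu> (a + 1) then fa_word [E \<nu>] else fa_zero) | a \<nu>.
        \<nu> \<in> Ib \<and> 1 \<le> a \<and> a + 1 \<le> n}
   \<union> {fa_sub (fa_word [T a, T a, E \<nu>]) (Qe t (at \<nu> a) (at \<nu> (a + 1)) a (a + 1) \<nu>) | a \<nu>.
        \<nu> \<in> Ib \<and> 1 \<le> a \<and> a + 1 \<le> n}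
   \<union> {fa_sub (fa_word [T a, T b, E \<nu>])
        (fa_smul (sg (podd (at \<nu> a) \<and> podd (at \<nu> (a + 1)) \<and> podd (at \<nu> b) \<and> podd (at \<nu> (b + 1))))
           (fa_word [T b, T a, E \<nu>])) | a b \<nu>.
        \<nu> \<in> Ib \<and> 1 \<le> a \<and> a + 1 \<le> n \<and> 1 \<le> b \<and> b + 1 \<le> n \<and> (a + 1 < b \<or> b + 1 < a)}
   \<union> {fa_sub (fa_sub (fa_word [T (a + 1), T a, T (a + 1), E \<nu>]) (fa_word [T a, T (a + 1), T a, E \<nu>]))
        (if at \<nu> a = at \<nu> (a + 2) \<and> \<not> podd (at \<nu> a)
         then braid_even t (at \<nu> a) (at \<nu> (a + 1)) a \<nu>
         else if at \<nu> a = at \<nu> (a + 2) \<and> podd (at \<nu> a)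
         then fa_smul (sg (podd (at \<nu> (a + 1)))) (braid_odd t (at \<nu> a) (at \<nu> (a + 1)) a \<nu>)
         else fa_zero) | a \<nu>.
        \<nu> \<in> Ib \<and> 1 \<le> a \<and> a + 2 \<le> n}
   \<union> (if n = 0 then {} else
       {fa_sum Ib (\<lambda>\<nu>. fa_word (replicate (lam (at \<nu> 1)) (X 1) @ [E \<nu>]))})
   \<union> {fa_word [E \<nu>] | \<nu>. \<nu> \<notin> Ib}
   \<union> {fa_word [X p] | p. p \<notin> {1..n}}
   \<union> {fa_word [T a] | a. \<not> (1 \<le> a \<and> a + 1 \<le> n)}"

definition in_center :: "('i, 'k::comm_ring_1) fa set \<Rightarrow> ('i, 'k) fa \<Rightarrow> bool" where
  "in_center Rs z \<longleftrightarrow> fin_supp z \<and>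
     (\<forall>u. fin_supp u \<longrightarrow> fa_sub (fa_mul u z) (fa_mul z u) \<in> ideal_gen Rs)"

definition xmono :: "nat list \<Rightarrow> 'i gen list" where
  "xmono ts = concat (map (\<lambda>p. replicate (ts ! (p - 1)) (X p)) [1..<length ts + 1])"

definition zsc :: "int \<Rightarrow> 'p::ab_group_add \<Rightarrow> 'p" where
  "zsc c x = (if c \<ge> 0 then (\<Sum>_<nat c. x) else - (\<Sum>_<nat (- c). x))"

end

theory Submission
  imports Defs "HOL-Library.Multiset"
begin

(* Since 1 = \<Sum>\<^sub>\<nu> e(\<nu>) and z is central, z = \<Sum>\<^sub>\<nu> z e(\<nu>) e(\<nu>) = \<Sum>\<^sub>\<nu> e(\<nu>) z e(\<nu>).
   Straightening with the defining relations shows that every word ending in e(\<nu>) is,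
   modulo the relations, a combination of the words x\<^sup>t T\<^sub>u e(\<nu>) with u a normal word of the
   symmetric group: the quadratic relation produces polynomials in the x's, all other
   relations just move generators past each other up to a sign.  As \<beta> is multiplicity free,
   every \<nu> in I\<^sup>\<beta> has pairwise distinct entries; this kills the correction terms of the
   mixed and braid relations, and it makes e(\<nu>) x\<^sup>t T\<^sub>u e(\<nu>) = x\<^sup>t T\<^sub>u e(u\<nu>) e(\<nu>) vanish unless u
   is empty.  So e(\<nu>) z e(\<nu>) lies in the span of the x\<^sup>t e(\<nu>). *)

declare upt_Suc [simp del]

definition fa_wrap :: "'i gen list \<Rightarrow> 'i gen list \<Rightarrow> ('i, 'k::comm_semiring_1) fa \<Rightarrow> ('i, 'k) fa" where
  "fa_wrap p s f = (\<lambda>w. if \<exists>m. w = p @ m @ s then f (THE m. w = p @ m @ s) else 0)"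

lemma fa_mul_word_left:
  "fa_mul (fa_word p) f = (\<lambda>w. if \<exists>m. w = p @ m then f (drop (length p) w) else 0)"
proof
  fix w :: "'a gen list"
  have "fa_mul (fa_word p) f w
      = (\<Sum>k\<le>length w. if k = length p then if take k w = p then f (drop k w) else 0 else 0)"
    unfolding fa_mul_def fa_word_def by (rule sum.cong) auto
  also have "\<dots> = (if length p \<le> length w \<and> take (length p) w = p then f (drop (length p) w) else 0)"
    by (simp add: sum.delta)
  also have "\<dots> = (if \<exists>m. w = p @ m then f (drop (length p) w) else 0)"
    by (metis append_eq_conv_conj append_take_drop_id le_add1 length_append)
  finally show "fa_mul (fa_word p) f w = (if \<exists>m. w = p @ m then f (drop (length p) w) else 0)" .
qed

lemma fa_mul_word_right:
  "fa_mul g (fa_word s) = (\<lambda>w. if \<exists>m. w = m @ s then g (take (length w - length s) w) else 0)"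
proof
  fix w :: "'a gen list"
  have suffix: "drop (length w - length s) w = s \<longleftrightarrow> (\<exists>m. w = m @ s)"
    by (auto, metis append_take_drop_id)
  have "fa_mul g (fa_word s) w
      = (\<Sum>k\<le>length w. if k = length w - length s then
           if drop k w = s then g (take k w) else 0 else 0)"
    unfolding fa_mul_def fa_word_def by (rule sum.cong) auto
  also have "\<dots> = (if \<exists>m. w = m @ s then g (take (length w - length s) w) else 0)"
    by (simp add: sum.delta suffix)
  finally show
    "fa_mul g (fa_word s) w = (if \<exists>m. w = m @ s then g (take (length w - length s) w) else 0)" .
qed

lemma fa_mul_words_eq_wrap: "fa_mul (fa_mul (fa_word p) f) (fa_word s) = fa_wrap p s f"
proof
  fix w :: "'a gen list"
  show "fa_mul (fa_mul (fa_word p) f) (fa_word s) w = fa_wrap p s f w"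
  proof (cases "\<exists>m. w = p @ m @ s")
    case True
    then obtain m where "w = p @ m @ s" by blast
    moreover from this have "(THE m. w = p @ m @ s) = m" by auto
    ultimately show ?thesis by (auto simp: fa_wrap_def fa_mul_word_left fa_mul_word_right)
  next
    case False
    then have "\<not> (\<exists>m. take (length w - length s) w = p @ m)" if "w = m' @ s" for m'
      using that by auto
    with False show ?thesis by (auto simp: fa_wrap_def fa_mul_word_left fa_mul_word_right)
  qed
qed

lemma fa_mul_Nil_right: "fa_mul f (fa_word []) = (f :: ('i, 'k::comm_semiring_1) fa)"
  by (simp add: fa_mul_word_right)

lemma fa_mul_Nil_left: "fa_mul (fa_word []) f = (f :: ('i, 'k::comm_semiring_1) fa)"
  by (simp add: fa_mul_word_left)

lemma fa_mul_word_eq_wrap: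
  "fa_mul f (fa_word s) = fa_wrap [] s (f :: ('i, 'k::comm_ring_1) fa)"
  "fa_mul (fa_word p) f = fa_wrap p [] f"
  using fa_mul_words_eq_wrap[of "[]" f s] fa_mul_words_eq_wrap[of p f "[]"]
  by (simp_all add: fa_mul_Nil_left fa_mul_Nil_right)

lemma fin_supp_fa_word: "fin_supp (fa_word w :: ('i, 'k::comm_semiring_1) fa)"
  unfolding fin_supp_def fa_word_def by (rule finite_subset[of _ "{w}"]) auto

lemma fa_wrap_word: "fa_wrap p s (fa_word w) = fa_word (p @ w @ s)"
proof
  fix v
  show "fa_wrap p s (fa_word w) v = fa_word (p @ w @ s) v"
  proof (cases "\<exists>m. v = p @ m @ s")
    case True
    then obtain m where "v = p @ m @ s" by blast
    moreover from this have "(THE m. v = p @ m @ s) = m" by auto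
    ultimately show ?thesis by (auto simp: fa_wrap_def fa_word_def)
  qed (auto simp: fa_wrap_def fa_word_def)
qed

lemma fa_wrap_zero: "fa_wrap p s fa_zero = fa_zero"
  and fa_wrap_add: "fa_wrap p s (fa_add f g) = fa_add (fa_wrap p s f) (fa_wrap p s g)"
  and fa_wrap_sub: "fa_wrap p s (fa_sub f g) = fa_sub (fa_wrap p s f) (fa_wrap p s g)"
  and fa_wrap_smul: "fa_wrap p s (fa_smul c f) = fa_smul c (fa_wrap p s f)"
  and fa_wrap_sum: "fa_wrap p s (fa_sum A F) = fa_sum A (\<lambda>x. fa_wrap p s (F x))"
  for f g :: "('i, 'k::comm_ring_1) fa"
  by (auto simp: fun_eq_iff fa_wrap_def fa_zero_def fa_add_def fa_sub_def fa_smul_def fa_sum_def)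

lemmas fa_wrap_simps = fa_wrap_word fa_wrap_zero fa_wrap_add fa_wrap_sub fa_wrap_smul fa_wrap_sum

lemma fa_wrap_Nil: "fa_wrap [] [] f = f"
  by (simp add: fa_wrap_def)

lemma fa_wrap_wrap: "fa_wrap p s (fa_wrap p' s' f) = fa_wrap (p @ p') (s' @ s) f"
  by (auto simp: fun_eq_iff fa_wrap_def)

lemma fa_eq_sum_words:
  assumes "fin_supp f"
  shows "f = fa_sum {w. f w \<noteq> 0} (\<lambda>w. fa_smul (f w) (fa_word w :: ('i, 'k::comm_ring_1) fa))"
proof
  fix v
  have "fa_sum {w. f w \<noteq> 0} (\<lambda>w. fa_smul (f w) (fa_word w :: ('i, 'k) fa)) v
      = (\<Sum>w\<in>{w. f w \<noteq> 0}. if w = v then f w else 0)"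
    unfolding fa_sum_def fa_smul_def fa_word_def by (rule sum.cong) auto
  also have "\<dots> = f v" using assms unfolding fin_supp_def by (simp add: sum.delta')
  finally show "f v = fa_sum {w. f w \<noteq> 0} (\<lambda>w. fa_smul (f w) (fa_word w :: ('i, 'k) fa)) v" ..
qed

lemma fa_wrap_eq_sum_words:
  "fin_supp f \<Longrightarrow>
   fa_wrap p s f =
     fa_sum {w. f w \<noteq> 0} (\<lambda>w. fa_smul (f w) (fa_word (p @ w @ s) :: ('i, 'k::comm_ring_1) fa))"
  by (subst fa_eq_sum_words) (simp_all add: fa_wrap_sum fa_wrap_smul fa_wrap_word)

lemma fa_mul_sub_right:
  "fa_mul u (fa_sub f g) = fa_sub (fa_mul u f) (fa_mul u (g :: ('i, 'k::comm_ring_1) fa))"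
  by (simp add: fun_eq_iff fa_mul_def fa_sub_def right_diff_distrib sum_subtractf)

lemma fa_mul_sum_right:
  "fa_mul u (fa_sum A F) = fa_sum A (\<lambda>x. fa_mul u (F x :: ('i, 'k::comm_ring_1) fa))"
  unfolding fa_mul_def fa_sum_def by (auto simp: fun_eq_iff sum_distrib_left intro: sum.swap)

lemma fa_smul_smul: "fa_smul c (fa_smul d f) = fa_smul (c * d) (f :: ('i, 'k::comm_ring_1) fa)"
  and fa_smul_one: "fa_smul 1 f = f"
  and fa_smul_zero: "fa_smul c fa_zero = (fa_zero :: ('i, 'k) fa)"
  by (auto simp: fa_smul_def fa_zero_def)

lemma fa_sub_zero: "fa_sub f fa_zero = (f :: ('i, 'k::comm_ring_1) fa)"
  by (simp add: fun_eq_iff fa_sub_def fa_zero_def)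

lemma fa_sum_zero_or_insert:
  "fa_sum {} F = fa_zero"
  "finite A \<Longrightarrow> x \<notin> A \<Longrightarrow> fa_sum (insert x A) F = fa_add (F x) (fa_sum A F)"
  "infinite A \<Longrightarrow> fa_sum A F = fa_zero"
  by (auto simp: fun_eq_iff fa_sum_def fa_zero_def fa_add_def)

lemma fa_sum_closed:
  assumes "fa_zero \<in> M" and "\<And>f g. f \<in> M \<Longrightarrow> g \<in> M \<Longrightarrow> fa_add f g \<in> M"
    and "\<And>x. x \<in> A \<Longrightarrow> F x \<in> M"
  shows "fa_sum A F \<in> M"
proof (cases "finite A")
  case True
  from this assms(3) show ?thesis
    by (induction A rule: finite_induct) (simp_all add: fa_sum_zero_or_insert assms(1,2))
qed (simp add: fa_sum_zero_or_insert assms(1))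

lemma fa_add_sum_smul:
  "fa_add (fa_sum S (\<lambda>x. fa_smul (c x) (F x))) (fa_sum S (\<lambda>x. fa_smul (d x) (F x)))
   = fa_sum S (\<lambda>x. fa_smul (c x + d x) (F x :: ('i, 'k::comm_ring_1) fa))"
  by (simp add: fun_eq_iff fa_add_def fa_sum_def fa_smul_def distrib_right sum.distrib)

lemma fa_sum_smul_extend:
  assumes "finite S'" "S \<subseteq> S'"
  shows "fa_sum S (\<lambda>x. fa_smul (c x) (F x)) =
    fa_sum S' (\<lambda>x. fa_smul (if x \<in> S then c x else 0) (F x :: ('i, 'k::comm_ring_1) fa))"
proof
  fix w
  show "fa_sum S (\<lambda>x. fa_smul (c x) (F x)) w =
    fa_sum S' (\<lambda>x. fa_smul (if x \<in> S then c x else 0) (F x)) w"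
    unfolding fa_sum_def fa_smul_def by (rule sum.mono_neutral_cong_left[OF assms]) auto
qed

section \<open>Congruence modulo the ideal generated by the relations\<close>

lemma ideal_gen_wrap: "a \<in> ideal_gen Rs \<Longrightarrow> fa_wrap p s a \<in> ideal_gen Rs"
  by (metis fa_mul_words_eq_wrap fin_supp_fa_word ideal_gen.mul)

definition fa_cong :: "('i, 'k::comm_ring_1) fa set \<Rightarrow> ('i, 'k) fa \<Rightarrow> ('i, 'k) fa \<Rightarrow> bool" where
  "fa_cong Rs f g \<longleftrightarrow> fa_sub f g \<in> ideal_gen Rs"

lemma fa_cong_refl: "fa_cong Rs f f"
proof -
  have "fa_sub f f = fa_zero" by (auto simp: fa_sub_def fa_zero_def)
  then show ?thesis by (simp add: fa_cong_def ideal_gen.zero)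
qed

lemma fa_cong_sym: "fa_cong Rs f g \<Longrightarrow> fa_cong Rs g f"
proof -
  have "fa_sub g f = fa_smul (-1) (fa_sub f g)" by (auto simp: fa_sub_def fa_smul_def)
  then show "fa_cong Rs f g \<Longrightarrow> fa_cong Rs g f" by (simp add: fa_cong_def ideal_gen.smul)
qed

lemma fa_cong_trans [trans]: "fa_cong Rs f g \<Longrightarrow> fa_cong Rs g h \<Longrightarrow> fa_cong Rs f h"
proof -
  have "fa_sub f h = fa_add (fa_sub f g) (fa_sub g h)" by (auto simp: fa_sub_def fa_add_def)
  then show "fa_cong Rs f g \<Longrightarrow> fa_cong Rs g h \<Longrightarrow> fa_cong Rs f h"
    by (simp add: fa_cong_def ideal_gen.add)
qed

lemma fa_cong_add: "fa_cong Rs f f' \<Longrightarrow> fa_cong Rs g g' \<Longrightarrow> fa_cong Rs (fa_add f g) (fa_add f' g')"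
proof -
  have "fa_sub (fa_add f g) (fa_add f' g') = fa_add (fa_sub f f') (fa_sub g g')"
    by (auto simp: fa_sub_def fa_add_def)
  then show "fa_cong Rs f f' \<Longrightarrow> fa_cong Rs g g' \<Longrightarrow> fa_cong Rs (fa_add f g) (fa_add f' g')"
    by (simp add: fa_cong_def ideal_gen.add)
qed

lemma fa_cong_smul: "fa_cong Rs f f' \<Longrightarrow> fa_cong Rs (fa_smul c f) (fa_smul c f')"
proof -
  have "fa_sub (fa_smul c f) (fa_smul c f') = fa_smul c (fa_sub f f')"
    by (auto simp: fa_sub_def fa_smul_def algebra_simps)
  then show "fa_cong Rs f f' \<Longrightarrow> fa_cong Rs (fa_smul c f) (fa_smul c f')"
    by (simp add: fa_cong_def ideal_gen.smul)
qed

lemma fa_cong_wrap: "fa_cong Rs f g \<Longrightarrow> fa_cong Rs (fa_wrap p s f) (fa_wrap p s g)"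
  unfolding fa_cong_def by (metis ideal_gen_wrap fa_wrap_sub)

lemma fa_cong_rel: "fa_sub f g \<in> Rs \<Longrightarrow> fa_cong Rs f g"
  by (simp add: fa_cong_def ideal_gen.base)

lemma fa_cong_mul_left:
  assumes "fin_supp u" "fa_cong Rs f g"
  shows "fa_cong Rs (fa_mul u f) (fa_mul u g)"
  using ideal_gen.mul[OF assms(2)[unfolded fa_cong_def] assms(1) fin_supp_fa_word, of "[]"]
  by (simp add: fa_cong_def fa_mul_Nil_right fa_mul_sub_right)

lemma in_center_commutes_word: "in_center Rs z \<Longrightarrow> fa_cong Rs (fa_wrap w [] z) (fa_wrap [] w z)"
  unfolding in_center_def fa_cong_def using fin_supp_fa_word by (metis fa_mul_word_eq_wrap)

inductive_set fa_span :: "'i gen list set \<Rightarrow> ('i, 'k::comm_ring_1) fa set" for B where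
  zero: "fa_zero \<in> fa_span B"
| word: "b \<in> B \<Longrightarrow> fa_word b \<in> fa_span B"
| add: "f \<in> fa_span B \<Longrightarrow> g \<in> fa_span B \<Longrightarrow> fa_add f g \<in> fa_span B"
| smul: "f \<in> fa_span B \<Longrightarrow> fa_smul c f \<in> fa_span B"

lemma fa_span_imageE:
  assumes "g \<in> fa_span (b ` A)"
  shows "\<exists>S c. finite S \<and> S \<subseteq> A \<and> g = fa_sum S (\<lambda>x. fa_smul (c x) (fa_word (b x)))"
  using assms
proof induction
  case zero
  show ?case by (rule exI[of _ "{}"]) (simp add: fa_sum_def fa_zero_def fun_eq_iff)
next
  case (word w)
  then obtain x where "x \<in> A" "w = b x" by blast
  then show ?case
    by (intro exI[of _ "{x}"] exI[of _ "\<lambda>_. 1"]) (simp add: fa_sum_def fa_smul_def fun_eq_iff)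
next
  case (add f g)
  then obtain S1 c1 S2 c2 where S: "finite S1" "S1 \<subseteq> A"
    "f = fa_sum S1 (\<lambda>x. fa_smul (c1 x) (fa_word (b x)))"
    "finite S2" "S2 \<subseteq> A" "g = fa_sum S2 (\<lambda>x. fa_smul (c2 x) (fa_word (b x)))"
    by blast
  let ?c = "\<lambda>x. (if x \<in> S1 then c1 x else 0) + (if x \<in> S2 then c2 x else 0)"
  have "f = fa_sum (S1 \<union> S2) (\<lambda>x. fa_smul (if x \<in> S1 then c1 x else 0) (fa_word (b x)))"
    unfolding S(3) using S(1,4) by (intro fa_sum_smul_extend) auto
  moreover have "g = fa_sum (S1 \<union> S2) (\<lambda>x. fa_smul (if x \<in> S2 then c2 x else 0) (fa_word (b x)))"
    unfolding S(6) using S(1,4) by (intro fa_sum_smul_extend) auto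
  ultimately have "fa_add f g = fa_sum (S1 \<union> S2) (\<lambda>x. fa_smul (?c x) (fa_word (b x)))"
    by (simp only: fa_add_sum_smul)
  with S show ?case by (intro exI[of _ "S1 \<union> S2"] exI[of _ ?c]) simp
next
  case (smul f k)
  then obtain S c where S: "finite S" "S \<subseteq> A" "f = fa_sum S (\<lambda>x. fa_smul (c x) (fa_word (b x)))"
    by blast
  then have "fa_smul k f = fa_sum S (\<lambda>x. fa_smul (k * c x) (fa_word (b x)))"
    by (simp add: fun_eq_iff fa_sum_def fa_smul_def sum_distrib_left mult.assoc)
  with S show ?case by (intro exI[of _ S] exI[of _ "\<lambda>x. k * c x"]) simp
qed

definition in_span_mod ::
  "('i, 'k::comm_ring_1) fa set \<Rightarrow> 'i gen list set \<Rightarrow> ('i, 'k) fa \<Rightarrow> bool" where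
  "in_span_mod Rs B f \<longleftrightarrow> (\<exists>g\<in>fa_span B. fa_cong Rs f g)"

lemma in_span_mod_cong: "fa_cong Rs f g \<Longrightarrow> in_span_mod Rs B g \<Longrightarrow> in_span_mod Rs B f"
  unfolding in_span_mod_def using fa_cong_trans by blast

lemma in_span_mod_zero: "in_span_mod Rs B fa_zero"
  unfolding in_span_mod_def using fa_cong_refl fa_span.zero by blast

lemma in_span_mod_word: "b \<in> B \<Longrightarrow> in_span_mod Rs B (fa_word b)"
  unfolding in_span_mod_def using fa_cong_refl fa_span.word by blast

lemma in_span_mod_add: "in_span_mod Rs B f \<Longrightarrow> in_span_mod Rs B g \<Longrightarrow> in_span_mod Rs B (fa_add f g)"
  unfolding in_span_mod_def using fa_cong_add fa_span.add by blast

lemma in_span_mod_smul: "in_span_mod Rs B f \<Longrightarrow> in_span_mod Rs B (fa_smul c f)"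
  unfolding in_span_mod_def using fa_cong_smul fa_span.smul by blast

lemma in_span_mod_sum: "(\<And>x. x \<in> A \<Longrightarrow> in_span_mod Rs B (F x)) \<Longrightarrow> in_span_mod Rs B (fa_sum A F)"
  using fa_sum_closed[of "Collect (in_span_mod Rs B)" A F]
    by (simp add: in_span_mod_zero in_span_mod_add)

lemma in_span_mod_wrap:
  assumes "in_span_mod Rs B f" and "\<And>b. b \<in> B \<Longrightarrow> in_span_mod Rs B' (fa_word (p @ b @ s))"
  shows "in_span_mod Rs B' (fa_wrap p s f)"
proof -
  obtain g where g: "g \<in> fa_span B" "fa_cong Rs f g" using assms(1) unfolding in_span_mod_def
    by blast
  from g(1) have "in_span_mod Rs B' (fa_wrap p s g)"
    by induction (simp_all add: fa_wrap_simps assms(2) in_span_mod_zero in_span_mod_add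
      in_span_mod_smul)
  then show ?thesis using fa_cong_wrap[OF g(2)] in_span_mod_cong by blast
qed

lemma in_span_mod_word_wrap:
  "in_span_mod Rs B (fa_word w) \<Longrightarrow> (\<And>b. b \<in> B \<Longrightarrow> in_span_mod Rs B' (fa_word (p @ b @ s))) \<Longrightarrow>
   in_span_mod Rs B' (fa_word (p @ w @ s))"
  using in_span_mod_wrap[of Rs B "fa_word w" B' p s] by (simp add: fa_wrap_word)

definition word_sim :: "('i, 'k::field) fa set \<Rightarrow> 'i gen list \<Rightarrow> 'i gen list \<Rightarrow> bool" where
  "word_sim Rs w w' \<longleftrightarrow> (\<exists>c. c \<noteq> 0 \<and> fa_cong Rs (fa_word w) (fa_smul c (fa_word w')))"

definition word_vanishes :: "('i, 'k::comm_ring_1) fa set \<Rightarrow> 'i gen list \<Rightarrow> bool" where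
  "word_vanishes Rs w \<longleftrightarrow> fa_cong Rs (fa_word w) fa_zero"

lemma word_sim_refl: "word_sim Rs w w"
  unfolding word_sim_def by (rule exI[of _ 1]) (simp add: fa_smul_one fa_cong_refl)

lemma word_sim_sym: "word_sim Rs w w' \<Longrightarrow> word_sim Rs w' w"
proof -
  assume "word_sim Rs w w'"
  then obtain c where c: "c \<noteq> 0" "fa_cong Rs (fa_word w) (fa_smul c (fa_word w'))"
    unfolding word_sim_def by blast
  have "fa_cong Rs (fa_smul (inverse c) (fa_word w)) (fa_word w')"
    using fa_cong_smul[OF c(2), of "inverse c"] c(1) by (simp add: fa_smul_smul fa_smul_one)
  then show ?thesis unfolding word_sim_def using c(1) fa_cong_sym inverse_nonzero_iff_nonzero
    by blast
qed

lemma word_sim_trans [trans]: "word_sim Rs w1 w2 \<Longrightarrow> word_sim Rs w2 w3 \<Longrightarrow> word_sim Rs w1 w3"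
proof -
  assume "word_sim Rs w1 w2" "word_sim Rs w2 w3"
  then obtain c d where c: "c \<noteq> 0" "fa_cong Rs (fa_word w1) (fa_smul c (fa_word w2))"
    and d: "d \<noteq> 0" "fa_cong Rs (fa_word w2) (fa_smul d (fa_word w3))"
    unfolding word_sim_def by blast
  have "fa_cong Rs (fa_word w1) (fa_smul (c * d) (fa_word w3))"
    using fa_cong_trans[OF c(2) fa_cong_smul[OF d(2), of c]] by (simp add: fa_smul_smul)
  moreover have "c * d \<noteq> 0" using c(1) d(1) by simp
  ultimately show ?thesis unfolding word_sim_def by blast
qed

lemma word_sim_wrap: "word_sim Rs w w' \<Longrightarrow> word_sim Rs (p @ w @ s) (p @ w' @ s)"
  unfolding word_sim_def by (metis fa_cong_wrap fa_wrap_word fa_wrap_smul)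

lemma word_sim_Cons: "word_sim Rs w w' \<Longrightarrow> word_sim Rs (g # w) (g # w')"
  using word_sim_wrap[of Rs w w' "[g]" "[]"] by simp

lemma word_sim_append: "word_sim Rs w w' \<Longrightarrow> word_sim Rs (p @ w) (p @ w')"
  using word_sim_wrap[of Rs w w' p "[]"] by simp

lemma word_sim_append_right: "word_sim Rs w w' \<Longrightarrow> word_sim Rs (w @ s) (w' @ s)"
  using word_sim_wrap[of Rs w w' "[]" s] by simp

lemma word_vanishes_wrap: "word_vanishes Rs w \<Longrightarrow> word_vanishes Rs (p @ w @ s)"
  unfolding word_vanishes_def by (metis fa_cong_wrap fa_wrap_word fa_wrap_zero)

lemma word_vanishes_sim: "word_sim Rs w w' \<Longrightarrow> word_vanishes Rs w' \<Longrightarrow> word_vanishes Rs w"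
  unfolding word_sim_def word_vanishes_def by (metis fa_cong_smul fa_cong_trans fa_smul_zero)

lemma word_vanishes_rel: "fa_word w \<in> Rs \<Longrightarrow> word_vanishes Rs w"
  unfolding word_vanishes_def by (rule fa_cong_rel) (simp add: fa_sub_zero)

lemma word_sim_relI: "fa_sub (fa_word w) (fa_smul c (fa_word w')) \<in> Rs \<Longrightarrow> c \<noteq> 0 \<Longrightarrow> word_sim Rs w w'"
  unfolding word_sim_def using fa_cong_rel by blast

lemma word_sim_relI1: "fa_sub (fa_word w) (fa_word w') \<in> Rs \<Longrightarrow> word_sim Rs w w'"
  using word_sim_relI[of w 1 w'] by (simp add: fa_smul_one)

lemma in_span_mod_word_sim:
  "word_sim Rs w w' \<Longrightarrow> in_span_mod Rs B (fa_word w') \<Longrightarrow> in_span_mod Rs B (fa_word w)"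
  unfolding word_sim_def using in_span_mod_cong in_span_mod_smul by blast

lemma in_span_mod_vanishing: "word_vanishes Rs w \<Longrightarrow> in_span_mod Rs B (fa_word w)"
  unfolding word_vanishes_def using in_span_mod_cong in_span_mod_zero by blast

section \<open>Normal words for the symmetric group\<close>

text \<open>In \<open>R(\<beta>)\<close>, \<open>w e(\<nu>) = e(word_perm w \<nu>) w\<close>.\<close>
fun word_perm :: "'i gen list \<Rightarrow> 'i list \<Rightarrow> 'i list" where
  "word_perm [] \<nu> = \<nu>"
| "word_perm (T a # w) \<nu> = swp a (word_perm w \<nu>)"
| "word_perm (X p # w) \<nu> = word_perm w \<nu>"
| "word_perm (E \<mu> # w) \<nu> = word_perm w \<nu>"

lemma word_perm_append: "word_perm (v @ w) \<nu> = word_perm v (word_perm w \<nu>)"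
proof (induction v)
  case (Cons g v) then show ?case by (cases g) auto
qed simp

lemma length_swp [simp]: "length (swp a \<sigma>) = length \<sigma>"
  by (simp add: swp_def)

lemma length_word_perm [simp]: "length (word_perm w \<sigma>) = length \<sigma>"
  by (induction w \<sigma> rule: word_perm.induct) auto

lemma nth_word_perm_T_above:
  "(\<forall>a\<in>set u. a < m) \<Longrightarrow> m \<le> j \<Longrightarrow> word_perm (map T u) \<sigma> ! j = \<sigma> ! j"
  by (induction u) (auto simp: swp_def)

lemma nth_word_perm_T_upt:
  assumes "1 \<le> k" "k \<le> Suc m" "Suc m \<le> length \<sigma>"
  shows "word_perm (map T [k..<Suc m]) \<sigma> ! (k - 1) = \<sigma> ! m"
  using assms
proof (induction "Suc m - k" arbitrary: k)
  case (Suc d)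
  then have k: "k < Suc m" by simp
  then have "[k..<Suc m] = k # [Suc k..<Suc m]" by (simp add: upt_conv_Cons)
  moreover have "word_perm (map T [Suc k..<Suc m]) \<sigma> ! k = \<sigma> ! m"
    using Suc.hyps(1)[of "Suc k"] Suc.hyps(2) Suc.prems k by simp
  ultimately show ?case
    using Suc.prems k by (simp add: swp_def nth_list_update)
qed simp

text \<open>Normal words for \<open>S\<^sub>m\<close> in the generators \<open>s\<^sub>1, \<dots>, s\<^sub>m\<^sub>-\<^sub>1\<close> (letter \<open>a\<close> stands for \<open>s\<^sub>a\<close>):
  a coset representative \<open>s\<^sub>k s\<^sub>k\<^sub>+\<^sub>1 \<cdots> s\<^sub>m\<^sub>-\<^sub>1\<close> (empty when \<open>k = m\<close>) followed by a normal word
  for \<open>S\<^sub>m\<^sub>-\<^sub>1\<close>.\<close>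
fun sym_nf :: "nat \<Rightarrow> nat list set" where
  "sym_nf 0 = {[]}"
| "sym_nf (Suc m) = {[k..<Suc m] @ u | k u. 1 \<le> k \<and> k \<le> Suc m \<and> u \<in> sym_nf m}"

lemma sym_nf_letters: "u \<in> sym_nf m \<Longrightarrow> a \<in> set u \<Longrightarrow> 1 \<le> a \<and> a < m"
proof (induction m arbitrary: u)
  case (Suc m)
  then obtain k u' where "u = [k..<Suc m] @ u'" "1 \<le> k" "u' \<in> sym_nf m" by auto
  with Suc show ?case by fastforce
qed simp

lemma upt_append_in_sym_nf: "1 \<le> k \<Longrightarrow> k \<le> Suc m \<Longrightarrow> u \<in> sym_nf m \<Longrightarrow> [k..<Suc m] @ u \<in> sym_nf (Suc m)"
  by auto

lemma sym_nf_mono: "u \<in> sym_nf m \<Longrightarrow> u \<in> sym_nf (Suc m)"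
  using upt_append_in_sym_nf[of "Suc m" m u] by simp

lemma Nil_in_sym_nf: "[] \<in> sym_nf m"
  by (induction m) (simp, metis sym_nf_mono)

lemma sym_nf_fixes_distinct:
  "u \<in> sym_nf m \<Longrightarrow> m \<le> length \<nu> \<Longrightarrow> distinct \<nu> \<Longrightarrow> word_perm (map T u) \<nu> = \<nu> \<Longrightarrow> u = []"
proof (induction m arbitrary: u)
  case (Suc m)
  from Suc.prems(1) obtain k u' where u: "u = [k..<Suc m] @ u'" "1 \<le> k" "k \<le> Suc m" "u' \<in> sym_nf m"
    by auto
  let ?\<sigma> = "word_perm (map T u') \<nu>"
  have "?\<sigma> ! m = \<nu> ! m"
    using sym_nf_letters[OF u(4)] by (intro nth_word_perm_T_above) auto
  moreover have "word_perm (map T [k..<Suc m]) ?\<sigma> ! (k - 1) = ?\<sigma> ! m"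
    using u(2,3) Suc.prems(2) by (intro nth_word_perm_T_upt) auto
  moreover have "word_perm (map T u) \<nu> = word_perm (map T [k..<Suc m]) ?\<sigma>"
    unfolding u(1) by (simp add: word_perm_append)
  ultimately have "\<nu> ! (k - 1) = \<nu> ! m" using Suc.prems(4) by simp
  then have "k = Suc m"
    using Suc.prems(2,3) u(2,3) nth_eq_iff_index_eq[of \<nu> "k - 1" m] by fastforce
  with u Suc show ?case by simp
qed simp

lemma xmono_replicate_0: "xmono (replicate m 0) = []"
  by (auto simp: xmono_def nth_replicate)

lemma xmono_split:
  assumes "1 \<le> p" "p \<le> length ts"
  shows "xmono ts = concat (map (\<lambda>q. replicate (ts ! (q - 1)) (X q)) [1..<p]) @
     replicate (ts ! (p - 1)) (X p) @
     concat (map (\<lambda>q. replicate (ts ! (q - 1)) (X q)) [p + 1..<length ts + 1])"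
proof -
  have "[1..<length ts + 1] = [1..<p] @ [p..<length ts + 1]"
    using assms upt_add_eq_append[of 1 p "length ts + 1 - p"] by simp
  also have "[p..<length ts + 1] = p # [p + 1..<length ts + 1]"
    using assms upt_conv_Cons[of p "length ts + 1"] by simp
  finally show ?thesis unfolding xmono_def by simp
qed

section \<open>Straightening words in the multiplicity-free case\<close>

locale multiplicity_free_klr =
  fixes podd :: "'i \<Rightarrow> bool" and t :: "'i \<Rightarrow> 'i \<Rightarrow> nat \<Rightarrow> nat \<Rightarrow> 'k::field"
    and n :: nat and Ib :: "'i list set" and lam :: "'i \<Rightarrow> nat"
  assumes Ib_length: "\<nu> \<in> Ib \<Longrightarrow> length \<nu> = n"
    and Ib_distinct: "\<nu> \<in> Ib \<Longrightarrow> distinct \<nu>"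
    and Ib_swp: "\<nu> \<in> Ib \<Longrightarrow> 1 \<le> a \<Longrightarrow> a + 1 \<le> n \<Longrightarrow> swp a \<nu> \<in> Ib"
begin

abbreviation Rs :: "('i, 'k) fa set" where "Rs \<equiv> cyc_rels podd t n Ib lam"

lemmas cyc_rels_iff = cyc_rels_def Un_iff mem_Collect_eq

lemma at_distinct: "\<nu> \<in> Ib \<Longrightarrow> a \<in> {1..n} \<Longrightarrow> b \<in> {1..n} \<Longrightarrow> a \<noteq> b \<Longrightarrow> at \<nu> a \<noteq> at \<nu> b"
  using Ib_distinct Ib_length by (auto simp: at_def nth_eq_iff_index_eq)

lemma word_vanishes_E_outside: "\<mu> \<notin> Ib \<Longrightarrow> word_vanishes Rs [E \<mu>]"
  by (rule word_vanishes_rel) (auto simp: cyc_rels_def)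

lemma word_vanishes_X_outside: "p \<notin> {1..n} \<Longrightarrow> word_vanishes Rs [X p]"
  by (rule word_vanishes_rel) (auto simp: cyc_rels_def)

lemma word_vanishes_T_outside: "\<not> (1 \<le> a \<and> a + 1 \<le> n) \<Longrightarrow> word_vanishes Rs [T a]"
  by (rule word_vanishes_rel) (auto simp: cyc_rels_def)

lemma rel_EE: "\<mu> \<in> Ib \<Longrightarrow> \<nu> \<in> Ib \<Longrightarrow>
  fa_sub (fa_word [E \<mu>, E \<nu>]) (if \<mu> = \<nu> then fa_word [E \<nu>] else fa_zero) \<in> Rs"
  unfolding cyc_rels_iff by blast

lemma word_sim_EE: "\<nu> \<in> Ib \<Longrightarrow> word_sim Rs [E \<nu>, E \<nu>] [E \<nu>]"
  using rel_EE[of \<nu> \<nu>] by (auto intro: word_sim_relI1)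

lemma word_vanishes_EE: "\<mu> \<in> Ib \<Longrightarrow> \<nu> \<in> Ib \<Longrightarrow> \<mu> \<noteq> \<nu> \<Longrightarrow> word_vanishes Rs [E \<mu>, E \<nu>]"
  unfolding word_vanishes_def using rel_EE[of \<mu> \<nu>] by (auto intro: fa_cong_rel)

lemma fa_cong_sum_E: "fa_cong Rs (fa_word []) (fa_sum Ib (\<lambda>\<nu>. fa_word [E \<nu>]))"
  by (rule fa_cong_sym, rule fa_cong_rel) (auto simp: cyc_rels_def)

lemma word_sim_XE: "\<nu> \<in> Ib \<Longrightarrow> p \<in> {1..n} \<Longrightarrow> word_sim Rs [X p, E \<nu>] [E \<nu>, X p]"
  by (rule word_sim_relI1) (unfold cyc_rels_iff, blast)

lemma word_sim_TE: "\<nu> \<in> Ib \<Longrightarrow> 1 \<le> a \<Longrightarrow> a + 1 \<le> n \<Longrightarrow> word_sim Rs [T a, E \<nu>] [E (swp a \<nu>), T a]"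
  by (rule word_sim_relI1) (unfold cyc_rels_iff, blast)

lemma sg_nonzero: "sg b \<noteq> (0::'k)"
  by (simp add: sg_def)

lemma word_sim_XX_E:
  "\<nu> \<in> Ib \<Longrightarrow> p \<in> {1..n} \<Longrightarrow> q \<in> {1..n} \<Longrightarrow> word_sim Rs [X p, X q, E \<nu>] [X q, X p, E \<nu>]"
  by (cases "p = q", simp add: word_sim_refl, rule word_sim_relI[OF _ sg_nonzero])
    (unfold cyc_rels_iff, blast)

lemma word_sim_TX_E:
  assumes "\<nu> \<in> Ib" "1 \<le> a" "a + 1 \<le> n" "p \<in> {1..n}"
  shows "\<exists>q\<in>{1..n}. word_sim Rs [T a, X p, E \<nu>] [X q, T a, E \<nu>]"
proof -
  have label: "at \<nu> a \<noteq> at \<nu> (a + 1)" using assms by (intro at_distinct) auto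
  consider "p = a + 1" | "p = a" | "p \<noteq> a" "p \<noteq> a + 1" by blast
  then show ?thesis
  proof cases
    case 1
    have "word_sim Rs [T a, X (a + 1), E \<nu>] [X a, T a, E \<nu>]"
      by (rule word_sim_relI[OF _ sg_nonzero])
        (insert assms label, unfold cyc_rels_iff, simp add: fa_sub_zero, blast)
    with 1 assms show ?thesis by auto
  next
    case 2
    have "word_sim Rs [X (a + 1), T a, E \<nu>] [T a, X a, E \<nu>]"
      by (rule word_sim_relI[OF _ sg_nonzero])
        (insert assms label, unfold cyc_rels_iff, simp add: fa_sub_zero, blast)
    with 2 assms show ?thesis by (auto intro: word_sim_sym)
  next
    case 3
    have "word_sim Rs [T a, X p, E \<nu>] [X p, T a, E \<nu>]"
      by (rule word_sim_relI[OF _ sg_nonzero]) (insert assms 3, unfold cyc_rels_iff, blast)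
    with assms show ?thesis by auto
  qed
qed

lemma word_sim_TT_far_E:
  "\<nu> \<in> Ib \<Longrightarrow> 1 \<le> a \<Longrightarrow> a + 1 \<le> n \<Longrightarrow> 1 \<le> b \<Longrightarrow> b + 1 \<le> n \<Longrightarrow> a + 1 < b \<or> b + 1 < a \<Longrightarrow>
   word_sim Rs [T a, T b, E \<nu>] [T b, T a, E \<nu>]"
  by (rule word_sim_relI[OF _ sg_nonzero]) (unfold cyc_rels_def, blast)

text \<open>Since \<open>\<nu>\<^sub>a \<noteq> \<nu>\<^sub>a\<^sub>+\<^sub>2\<close>, the braid relation holds without correction term.\<close>
lemma word_sim_braid_E:
  assumes "\<nu> \<in> Ib" "1 \<le> a" "a + 2 \<le> n"
  shows "word_sim Rs [T (a + 1), T a, T (a + 1), E \<nu>] [T a, T (a + 1), T a, E \<nu>]"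
proof -
  have "at \<nu> a \<noteq> at \<nu> (a + 2)" using assms by (intro at_distinct) auto
  with assms show ?thesis
    by (intro word_sim_relI1) (unfold cyc_rels_iff, simp add: fa_sub_zero, blast)
qed

lemma fa_cong_TT_E: "\<nu> \<in> Ib \<Longrightarrow> 1 \<le> a \<Longrightarrow> a + 1 \<le> n \<Longrightarrow>
   fa_cong Rs (fa_word [T a, T a, E \<nu>]) (Qe t (at \<nu> a) (at \<nu> (a + 1)) a (a + 1) \<nu>)"
  by (rule fa_cong_rel) (unfold cyc_rels_iff, blast)

fun valid_gen :: "'i gen \<Rightarrow> bool" where
  "valid_gen (X p) \<longleftrightarrow> 1 \<le> p \<and> p \<le> n"
| "valid_gen (T a) \<longleftrightarrow> 1 \<le> a \<and> a + 1 \<le> n"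
| "valid_gen (E \<mu>) \<longleftrightarrow> False"

lemma word_perm_in_Ib: "list_all valid_gen w \<Longrightarrow> \<nu> \<in> Ib \<Longrightarrow> word_perm w \<nu> \<in> Ib"
proof (induction w)
  case (Cons g w) then show ?case by (cases g) (auto intro: Ib_swp)
qed simp

lemma word_sim_insert_E:
  "list_all valid_gen w \<Longrightarrow> \<nu> \<in> Ib \<Longrightarrow> word_sim Rs (w @ [E \<nu>]) (E (word_perm w \<nu>) # w @ [E \<nu>])"
proof (induction w)
  case Nil
  then show ?case using word_sim_sym[OF word_sim_EE] by simp
next
  case (Cons g w)
  let ?\<mu> = "word_perm w \<nu>"
  have "?\<mu> \<in> Ib" using Cons word_perm_in_Ib by simp
  with Cons.prems have swap: "word_sim Rs [g, E ?\<mu>] [E (word_perm (g # w) \<nu>), g]"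
    by (cases g) (auto intro: word_sim_XE word_sim_TE)
  have "word_sim Rs (g # w @ [E \<nu>]) (g # E ?\<mu> # w @ [E \<nu>])"
    using Cons by (auto intro: word_sim_Cons)
  also have "word_sim Rs \<dots> (E (word_perm (g # w) \<nu>) # g # w @ [E \<nu>])"
    using word_sim_append_right[OF swap, of "w @ [E \<nu>]"] by simp
  finally show ?case by simp
qed

lemma word_sim_absorb_E:
  "list_all valid_gen w \<Longrightarrow> \<nu> \<in> Ib \<Longrightarrow> \<mu> = word_perm w \<nu> \<Longrightarrow> word_sim Rs (E \<mu> # w @ [E \<nu>]) (w @ [E \<nu>])"
  using word_sim_sym[OF word_sim_insert_E] by simp

lemma word_vanishes_wrong_E:
  assumes "list_all valid_gen w" "\<nu> \<in> Ib" "\<mu> \<noteq> word_perm w \<nu>"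
  shows "word_vanishes Rs (E \<mu> # w @ [E \<nu>])"
proof -
  have "word_perm w \<nu> \<in> Ib" using assms word_perm_in_Ib by simp
  then have "word_vanishes Rs [E \<mu>, E (word_perm w \<nu>)]"
    using assms(3) word_vanishes_EE word_vanishes_E_outside[of \<mu>]
      word_vanishes_wrap[of Rs "[E \<mu>]" "[]" "[E (word_perm w \<nu>)]"]
    by (cases "\<mu> \<in> Ib") auto
  then have "word_vanishes Rs (E \<mu> # E (word_perm w \<nu>) # w @ [E \<nu>])"
    using word_vanishes_wrap[of Rs "[E \<mu>, E (word_perm w \<nu>)]" "[]" "w @ [E \<nu>]"] by simp
  then show ?thesis
    using word_vanishes_sim word_sim_Cons[OF word_sim_insert_E[OF assms(1,2)]] by blast
qed

lemma word_sim_at_E: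
  assumes "list_all valid_gen w" "\<nu> \<in> Ib"
    and "word_sim Rs (l @ [E (word_perm w \<nu>)]) (l' @ [E (word_perm w \<nu>)])"
  shows "word_sim Rs (l @ w @ [E \<nu>]) (l' @ w @ [E \<nu>])"
proof -
  have "word_sim Rs (l @ w @ [E \<nu>]) (l @ E (word_perm w \<nu>) # w @ [E \<nu>])"
    using word_sim_append[OF word_sim_insert_E[OF assms(1,2)]] .
  also have "word_sim Rs \<dots> (l' @ E (word_perm w \<nu>) # w @ [E \<nu>])"
    using word_sim_append_right[OF assms(3), of "w @ [E \<nu>]"] by simp
  also have "word_sim Rs \<dots> (l' @ w @ [E \<nu>])"
    using word_sim_append[OF word_sim_sym[OF word_sim_insert_E[OF assms(1,2)]]] .
  finally show ?thesis .
qed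

lemma word_sim_XX:
  "list_all valid_gen w \<Longrightarrow> \<nu> \<in> Ib \<Longrightarrow> p \<in> {1..n} \<Longrightarrow> q \<in> {1..n} \<Longrightarrow>
   word_sim Rs (X p # X q # w @ [E \<nu>]) (X q # X p # w @ [E \<nu>])"
  using word_sim_at_E[of w \<nu> "[X p, X q]" "[X q, X p]"] word_sim_XX_E word_perm_in_Ib by simp

lemma word_sim_TX:
  assumes "list_all valid_gen w" "\<nu> \<in> Ib" "1 \<le> a" "a + 1 \<le> n" "p \<in> {1..n}"
  shows "\<exists>q\<in>{1..n}. word_sim Rs (T a # X p # w @ [E \<nu>]) (X q # T a # w @ [E \<nu>])"
proof -
  obtain q where "q \<in> {1..n}"
    "word_sim Rs [T a, X p, E (word_perm w \<nu>)] [X q, T a, E (word_perm w \<nu>)]"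
    using word_sim_TX_E[OF word_perm_in_Ib[OF assms(1,2)] assms(3-5)] by blast
  then show ?thesis using word_sim_at_E[OF assms(1,2), of "[T a, X p]" "[X q, T a]"] by auto
qed

lemma word_sim_TT_far:
  "list_all valid_gen w \<Longrightarrow> \<nu> \<in> Ib \<Longrightarrow> 1 \<le> a \<Longrightarrow> a + 1 \<le> n \<Longrightarrow> 1 \<le> b \<Longrightarrow> b + 1 \<le> n \<Longrightarrow>
   a + 1 < b \<or> b + 1 < a \<Longrightarrow> word_sim Rs (T a # T b # w @ [E \<nu>]) (T b # T a # w @ [E \<nu>])"
  using word_sim_at_E[of w \<nu> "[T a, T b]" "[T b, T a]"] word_sim_TT_far_E word_perm_in_Ib by simp

lemma word_sim_braid:
  "list_all valid_gen w \<Longrightarrow> \<nu> \<in> Ib \<Longrightarrow> 1 \<le> a \<Longrightarrow> a + 2 \<le> n \<Longrightarrow>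
   word_sim Rs (T (a + 1) # T a # T (a + 1) # w @ [E \<nu>]) (T a # T (a + 1) # T a # w @ [E \<nu>])"
  using word_sim_at_E[of w \<nu> "[T (a + 1), T a, T (a + 1)]" "[T a, T (a + 1), T a]"]
    word_sim_braid_E word_perm_in_Ib by simp

definition x_word :: "'i gen list \<Rightarrow> bool" where
  "x_word ys \<longleftrightarrow> (\<forall>g\<in>set ys. \<exists>q. g = X q \<and> 1 \<le> q \<and> q \<le> n)"

lemma x_word_simps [simp]:
  "x_word []"
  "x_word (g # ys) \<longleftrightarrow> (\<exists>q. g = X q \<and> 1 \<le> q \<and> q \<le> n) \<and> x_word ys"
  "x_word (ys @ zs) \<longleftrightarrow> x_word ys \<and> x_word zs"
  by (auto simp: x_word_def)

lemma x_word_valid: "x_word ys \<Longrightarrow> list_all valid_gen ys"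
  by (auto simp: x_word_def list_all_iff)

lemma word_perm_x_word: "x_word ys \<Longrightarrow> word_perm (ys @ w) \<nu> = word_perm w \<nu>"
  by (induction ys) auto

lemma x_word_xmono: "length ts \<le> n \<Longrightarrow> x_word (xmono ts)"
  by (auto simp: x_word_def xmono_def)

lemma word_sim_X_past_x_word:
  "x_word ys \<Longrightarrow> list_all valid_gen w \<Longrightarrow> \<nu> \<in> Ib \<Longrightarrow> p \<in> {1..n} \<Longrightarrow>
   word_sim Rs (X p # ys @ w @ [E \<nu>]) (ys @ X p # w @ [E \<nu>])"
proof (induction ys)
  case (Cons g ys)
  then obtain q where q: "g = X q" "q \<in> {1..n}" by auto
  have "word_sim Rs (X p # X q # ys @ w @ [E \<nu>]) (X q # X p # ys @ w @ [E \<nu>])"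
    using word_sim_XX[of "ys @ w" \<nu> p q] Cons q x_word_valid by simp
  also have "word_sim Rs \<dots> (X q # ys @ X p # w @ [E \<nu>])"
    using Cons by (auto intro: word_sim_Cons)
  finally show ?case using q by simp
qed (simp add: word_sim_refl)

lemma word_sim_X_xmono:
  assumes "length ts = n" "p \<in> {1..n}" "list_all valid_gen w" "\<nu> \<in> Ib"
  shows "word_sim Rs (X p # xmono ts @ w @ [E \<nu>])
    (xmono (ts[p - 1 := Suc (ts ! (p - 1))]) @ w @ [E \<nu>])"
proof -
  let ?ts' = "ts[p - 1 := Suc (ts ! (p - 1))]"
  define blocks :: "nat list \<Rightarrow> nat list \<Rightarrow> 'i gen list"
    where "blocks us qs = concat (map (\<lambda>q. replicate (us ! (q - 1)) (X q)) qs)" for us qs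
  let ?A = "blocks ts [1..<p]" and ?B = "replicate (ts ! (p - 1)) (X p)"
    and ?C = "blocks ts [p + 1..<n + 1]"
  have same: "blocks ?ts' qs = blocks ts qs" if out: "p \<notin> set qs" "\<forall>q\<in>set qs. 1 \<le> q" for qs
  proof -
    have "p - 1 \<noteq> q - 1" if "q \<in> set qs" for q
    proof -
      have "1 \<le> q" "q \<noteq> p" using that out by auto
      with assms(2) show ?thesis by auto
    qed
    then show ?thesis unfolding blocks_def by (intro arg_cong[where f = concat] map_cong) auto
  qed
  have "xmono ts = ?A @ ?B @ ?C"
    using xmono_split[of p ts] assms(1,2) by (simp add: blocks_def)
  moreover have "xmono ?ts' = ?A @ X p # ?B @ ?C"
  proof -
    have "xmono ?ts' = blocks ?ts' [1..<p] @ X p # ?B @ blocks ?ts' [p + 1..<n + 1]"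
      using xmono_split[of p ?ts'] assms(1,2) by (simp add: blocks_def)
    then show ?thesis
      using same[of "[1..<p]"] same[of "[p + 1..<n + 1]"] assms(1,2) by simp
  qed
  moreover have "x_word ?A" "x_word (?B @ ?C)"
    using assms(2) by (auto simp: x_word_def blocks_def)
  ultimately show ?thesis
    using word_sim_X_past_x_word[of ?A "?B @ ?C @ w" \<nu> p] assms(2-4) x_word_valid by simp
qed

lemma word_sim_x_word_xmono:
  "x_word xs \<Longrightarrow> length ts = n \<Longrightarrow> list_all valid_gen w \<Longrightarrow> \<nu> \<in> Ib \<Longrightarrow>
   \<exists>ts'. length ts' = n \<and> word_sim Rs (xs @ xmono ts @ w @ [E \<nu>]) (xmono ts' @ w @ [E \<nu>])"
proof (induction xs)
  case Nil then show ?case using word_sim_refl by fastforce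
next
  case (Cons g xs)
  then obtain p where p: "g = X p" "p \<in> {1..n}" by auto
  from Cons obtain ts' where ts': "length ts' = n"
    "word_sim Rs (xs @ xmono ts @ w @ [E \<nu>]) (xmono ts' @ w @ [E \<nu>])"
    by auto
  have "word_sim Rs (X p # xs @ xmono ts @ w @ [E \<nu>]) (X p # xmono ts' @ w @ [E \<nu>])"
    using word_sim_Cons[OF ts'(2)] .
  also have "word_sim Rs \<dots> (xmono (ts'[p - 1 := Suc (ts' ! (p - 1))]) @ w @ [E \<nu>])"
    using word_sim_X_xmono[OF ts'(1) p(2) Cons.prems(3,4)] .
  finally show ?case
    using p ts'(1) by (intro exI[of _ "ts'[p - 1 := Suc (ts' ! (p - 1))]"]) simp
qed

lemma word_sim_T_past_x_word:
  "x_word ys \<Longrightarrow> list_all valid_gen w \<Longrightarrow> \<nu> \<in> Ib \<Longrightarrow> 1 \<le> a \<Longrightarrow> a + 1 \<le> n \<Longrightarrow>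
   \<exists>ys'. x_word ys' \<and> word_sim Rs (T a # ys @ w @ [E \<nu>]) (ys' @ T a # w @ [E \<nu>])"
proof (induction ys)
  case Nil then show ?case using word_sim_refl by fastforce
next
  case (Cons g ys)
  then obtain p where p: "g = X p" "p \<in> {1..n}" by auto
  from Cons obtain ys' where ys': "x_word ys'"
    "word_sim Rs (T a # ys @ w @ [E \<nu>]) (ys' @ T a # w @ [E \<nu>])"
    by auto
  obtain q where q: "q \<in> {1..n}"
    "word_sim Rs (T a # X p # ys @ w @ [E \<nu>]) (X q # T a # ys @ w @ [E \<nu>])"
    using word_sim_TX[of "ys @ w" \<nu> a p] Cons.prems p x_word_valid by auto
  note q(2)
  also have "word_sim Rs (X q # T a # ys @ w @ [E \<nu>]) (X q # ys' @ T a # w @ [E \<nu>])"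
    using word_sim_Cons[OF ys'(2)] .
  finally show ?case using p q(1) ys'(1) by (intro exI[of _ "X q # ys'"]) auto
qed

lemma word_sim_Ts_past_x_word:
  "x_word ys \<Longrightarrow> list_all valid_gen w \<Longrightarrow> \<nu> \<in> Ib \<Longrightarrow> list_all valid_gen (map T c) \<Longrightarrow>
   \<exists>ys'. x_word ys' \<and> word_sim Rs (map T c @ ys @ w @ [E \<nu>]) (ys' @ map T c @ w @ [E \<nu>])"
proof (induction c)
  case Nil then show ?case using word_sim_refl by fastforce
next
  case (Cons a c)
  from Cons obtain ys' where ys': "x_word ys'"
    "word_sim Rs (map T c @ ys @ w @ [E \<nu>]) (ys' @ map T c @ w @ [E \<nu>])"
    by auto
  obtain ys'' where ys'': "x_word ys''"
    "word_sim Rs (T a # ys' @ map T c @ w @ [E \<nu>]) (ys'' @ T a # map T c @ w @ [E \<nu>])"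
    using word_sim_T_past_x_word[OF ys'(1), of "map T c @ w" \<nu> a] Cons.prems by auto
  have "word_sim Rs (T a # map T c @ ys @ w @ [E \<nu>]) (T a # ys' @ map T c @ w @ [E \<nu>])"
    using word_sim_Cons[OF ys'(2)] .
  also note ys''(2)
  finally show ?case using ys''(1) by auto
qed

lemma word_sim_T_past_far:
  "list_all valid_gen (map T c) \<Longrightarrow> \<forall>b\<in>set c. a + 1 < b \<or> b + 1 < a \<Longrightarrow> 1 \<le> a \<Longrightarrow> a + 1 \<le> n \<Longrightarrow>
   list_all valid_gen w \<Longrightarrow> \<nu> \<in> Ib \<Longrightarrow>
   word_sim Rs (T a # map T c @ w @ [E \<nu>]) (map T c @ T a # w @ [E \<nu>])"
proof (induction c)
  case (Cons b c)
  have "word_sim Rs (T a # T b # map T c @ w @ [E \<nu>]) (T b # T a # map T c @ w @ [E \<nu>])"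
    using word_sim_TT_far[of "map T c @ w" \<nu> a b] Cons.prems by auto
  also have "word_sim Rs \<dots> (T b # map T c @ T a # w @ [E \<nu>])"
    using Cons by (auto intro: word_sim_Cons)
  finally show ?case by simp
qed (simp add: word_sim_refl)

text \<open>Commute \<open>s\<^sub>a\<close> past \<open>s\<^sub>k \<cdots> s\<^sub>a\<^sub>-\<^sub>2\<close>, braid \<open>s\<^sub>a s\<^sub>a\<^sub>-\<^sub>1 s\<^sub>a = s\<^sub>a\<^sub>-\<^sub>1 s\<^sub>a s\<^sub>a\<^sub>-\<^sub>1\<close>, and commute
  \<open>s\<^sub>a\<^sub>-\<^sub>1\<close> past \<open>s\<^sub>a\<^sub>+\<^sub>1 \<cdots> s\<^sub>m\<close>.\<close>
lemma word_sim_T_past_cycle: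
  assumes "1 \<le> k" "k < a" "a \<le> m" "m + 1 \<le> n" "list_all valid_gen w" "\<nu> \<in> Ib"
  shows "word_sim Rs (T a # map T [k..<Suc m] @ w @ [E \<nu>])
    (map T [k..<Suc m] @ T (a - 1) # w @ [E \<nu>])"
proof -
  let ?L = "map T [k..<a - 1]" and ?R = "map T [a + 1..<Suc m]"
  have cycle: "map T [k..<Suc m] = ?L @ T (a - 1) # T a # ?R"
  proof -
    have "[k..<Suc m] = [k..<a - 1] @ [a - 1..<Suc m]"
      using assms upt_add_eq_append[of k "a - 1" "Suc m - (a - 1)"] by simp
    also have "[a - 1..<Suc m] = (a - 1) # a # [a + 1..<Suc m]"
      using assms by (simp add: upt_conv_Cons)
    finally show ?thesis by simp
  qed
  have valid: "list_all valid_gen (?R @ w)" "list_all valid_gen ?L"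
    using assms by (auto simp: list_all_iff)
  have far: "word_sim Rs (T (a - 1) # ?R @ w @ [E \<nu>]) (?R @ T (a - 1) # w @ [E \<nu>])"
    using assms by (intro word_sim_T_past_far) (auto simp: list_all_iff)
  have "word_sim Rs (T a # ?L @ (T (a - 1) # T a # ?R @ w) @ [E \<nu>])
      (?L @ T a # (T (a - 1) # T a # ?R @ w) @ [E \<nu>])"
    using assms valid by (intro word_sim_T_past_far) auto
  also have "word_sim Rs \<dots> (?L @ T (a - 1) # T a # T (a - 1) # (?R @ w) @ [E \<nu>])"
    using word_sim_append[OF word_sim_braid[OF valid(1) assms(6), of "a - 1"]] assms by simp
  also have "word_sim Rs \<dots> (?L @ T (a - 1) # T a # ?R @ T (a - 1) # w @ [E \<nu>])"
    using word_sim_append[OF far, of "?L @ [T (a - 1), T a]"] by simp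
  finally show ?thesis unfolding cycle by simp
qed

definition std_words :: "nat \<Rightarrow> 'i list \<Rightarrow> 'i gen list set" where
  "std_words m \<nu> = {xmono ts @ map T u @ [E \<nu>] | ts u. length ts = n \<and> u \<in> sym_nf m}"

lemma valid_sym_nf: "u \<in> sym_nf m \<Longrightarrow> m \<le> n \<Longrightarrow> list_all valid_gen (map T u)"
  using sym_nf_letters by (fastforce simp: list_all_iff)

lemma in_span_std_word:
  "length ts = n \<Longrightarrow> u \<in> sym_nf m \<Longrightarrow>
   in_span_mod Rs (std_words m \<nu>) (fa_word (xmono ts @ map T u @ [E \<nu>]))"
  by (rule in_span_mod_word) (auto simp: std_words_def)

lemma in_span_x_word_std:
  assumes "x_word xs" "length ts = n" "u \<in> sym_nf m" "m \<le> n" "\<nu> \<in> Ib"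
  shows "in_span_mod Rs (std_words m \<nu>) (fa_word (xs @ xmono ts @ map T u @ [E \<nu>]))"
proof -
  obtain ts' where "length ts' = n"
    "word_sim Rs (xs @ xmono ts @ map T u @ [E \<nu>]) (xmono ts' @ map T u @ [E \<nu>])"
    using word_sim_x_word_xmono[OF assms(1,2) valid_sym_nf[OF assms(3,4)] assms(5)] by blast
  then show ?thesis using in_span_mod_word_sim in_span_std_word assms(3) by blast
qed

lemma in_span_Ts_x_word_std:
  assumes "c @ v \<in> sym_nf m" "m \<le> n" "length ts = n" "\<nu> \<in> Ib"
  shows "in_span_mod Rs (std_words m \<nu>) (fa_word (map T c @ xmono ts @ map T v @ [E \<nu>]))"
proof -
  have "list_all valid_gen (map T c)" "list_all valid_gen (map T v)"
    using valid_sym_nf[OF assms(1,2)] by simp_all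
  then obtain ys where ys: "x_word ys"
    "word_sim Rs (map T c @ xmono ts @ map T v @ [E \<nu>]) (ys @ map T c @ map T v @ [E \<nu>])"
    using word_sim_Ts_past_x_word[OF x_word_xmono, of ts "map T v" \<nu> c] assms(3,4) by auto
  have "in_span_mod Rs (std_words m \<nu>) (fa_word (ys @ map T (c @ v) @ [E \<nu>]))"
    using in_span_x_word_std[OF ys(1), of "replicate n 0" "c @ v" m \<nu>] assms
    by (simp add: xmono_replicate_0)
  with ys(2) show ?thesis using in_span_mod_word_sim by simp
qed

lemma in_span_cycle_std:
  assumes "in_span_mod Rs (std_words m \<nu>) (fa_word w)" "1 \<le> k" "k \<le> Suc m" "Suc m \<le> n" "\<nu> \<in> Ib"
  shows "in_span_mod Rs (std_words (Suc m) \<nu>) (fa_word (map T [k..<Suc m] @ w))"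
proof -
  have "in_span_mod Rs (std_words (Suc m) \<nu>) (fa_word (map T [k..<Suc m] @ w @ []))"
  proof (rule in_span_mod_word_wrap[OF assms(1)])
    fix b assume "b \<in> std_words m \<nu>"
    then obtain ts v where "b = xmono ts @ map T v @ [E \<nu>]" "length ts = n" "v \<in> sym_nf m"
      by (auto simp: std_words_def)
    moreover from this(3) have "[k..<Suc m] @ v \<in> sym_nf (Suc m)"
      using assms(2,3) by (intro upt_append_in_sym_nf) auto
    ultimately show "in_span_mod Rs (std_words (Suc m) \<nu>) (fa_word (map T [k..<Suc m] @ b @ []))"
      using in_span_Ts_x_word_std assms(4,5) by simp
  qed
  then show ?thesis by simp
qed

lemma in_span_T_cycle_square:
  assumes "Suc m \<le> n" "1 \<le> k" "k < Suc m" "u \<in> sym_nf m" "\<nu> \<in> Ib"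
  shows "in_span_mod Rs (std_words (Suc m) \<nu>) (fa_word (T k # map T [k..<Suc m] @ map T u @ [E \<nu>]))"
proof -
  let ?rest = "map T [Suc k..<Suc m] @ map T u"
  let ?\<mu> = "word_perm ?rest \<nu>"
  let ?B = "std_words (Suc m) \<nu>"
  have valid: "list_all valid_gen ?rest"
    using assms valid_sym_nf[OF assms(4)] by (auto simp: list_all_iff)
  have k: "1 \<le> k" "k + 1 \<le> n" using assms by auto
  have nf: "[Suc k..<Suc m] @ u \<in> sym_nf (Suc m)" using assms(3,4)
    by (intro upt_append_in_sym_nf) auto
  have "word_sim Rs (T k # map T [k..<Suc m] @ map T u @ [E \<nu>]) ([T k, T k] @ E ?\<mu> # ?rest @ [E \<nu>])"
    using word_sim_append[OF word_sim_insert_E[OF valid assms(5)], of "[T k, T k]"] assms(3)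
    by (simp add: upt_conv_Cons)
  moreover have "fa_cong Rs (fa_word ([T k, T k] @ E ?\<mu> # ?rest @ [E \<nu>]))
      (fa_wrap [] (?rest @ [E \<nu>]) (Qe t (at ?\<mu> k) (at ?\<mu> (k + 1)) k (k + 1) ?\<mu>))"
    using fa_cong_wrap[OF fa_cong_TT_E[OF word_perm_in_Ib[OF valid assms(5)] k],
        of "[]" "?rest @ [E \<nu>]"]
    by (simp add: fa_wrap_word)
  moreover have
    "in_span_mod Rs ?B (fa_wrap [] (?rest @ [E \<nu>]) (Qe t (at ?\<mu> k) (at ?\<mu> (k + 1)) k (k + 1) ?\<mu>))"
  proof -
    have "in_span_mod Rs ?B
      (fa_word (replicate r (X k) @ replicate s (X (k + 1)) @ E ?\<mu> # ?rest @ [E \<nu>]))"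
      for r s
    proof -
      let ?xs = "replicate r (X k) @ replicate s (X (k + 1))"
      have "x_word ?xs" using k by (auto simp: x_word_def)
      then have "in_span_mod Rs ?B (fa_word (?xs @ ?rest @ [E \<nu>]))"
        using in_span_x_word_std[of ?xs "replicate n 0" "[Suc k..<Suc m] @ u" "Suc m" \<nu>] nf assms
        by (simp add: xmono_replicate_0)
      then show ?thesis
        using in_span_mod_word_sim
            [OF word_sim_append[OF word_sim_absorb_E[OF valid assms(5) refl], of ?xs]]
        by simp
    qed
    then show ?thesis
      unfolding Qe_def fa_wrap_sum
      by (intro in_span_mod_sum) (auto simp: fa_wrap_smul fa_wrap_word intro!: in_span_mod_smul)
  qed
  ultimately show ?thesis using in_span_mod_word_sim in_span_mod_cong by blast
qed

lemma in_span_T_std: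
  "m \<le> n \<Longrightarrow> u \<in> sym_nf m \<Longrightarrow> 1 \<le> a \<Longrightarrow> a < m \<Longrightarrow> \<nu> \<in> Ib \<Longrightarrow>
   in_span_mod Rs (std_words m \<nu>) (fa_word (T a # map T u @ [E \<nu>]))"
proof (induction m arbitrary: u a)
  case (Suc m)
  from Suc.prems(2) obtain k u' where u: "u = [k..<Suc m] @ u'" "1 \<le> k" "k \<le> Suc m" "u' \<in> sym_nf m"
    by auto
  have valid: "list_all valid_gen (map T u')" using valid_sym_nf[OF u(4)] Suc.prems(1) by simp
  have cycle_then_T:
    "in_span_mod Rs (std_words (Suc m) \<nu>) (fa_word (map T [k..<Suc m] @ T a' # map T u' @ [E \<nu>]))"
    if "1 \<le> a'" "a' < m" for a'
    using Suc.IH[OF _ u(4) that Suc.prems(5)] Suc.prems(1,5) u(2,3)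
      by (intro in_span_cycle_std) auto
  consider (far) "a + 1 < k" | (std) "a + 1 = k" | (square) "a = k" | (braid) "k < a" by linarith
  then show ?case
  proof cases
    case far
    have "word_sim Rs (T a # map T [k..<Suc m] @ map T u' @ [E \<nu>])
        (map T [k..<Suc m] @ T a # map T u' @ [E \<nu>])"
      using far u(3) Suc.prems(1,3,5) valid by (intro word_sim_T_past_far) (auto simp: list_all_iff)
    then show ?thesis using in_span_mod_word_sim cycle_then_T[of a] far u Suc.prems(3) by simp
  next
    case std
    have "in_span_mod Rs (std_words (Suc m) \<nu>)
        (fa_word (xmono (replicate n 0) @ map T ([a..<Suc m] @ u') @ [E \<nu>]))"
      using Suc.prems u(4) by (intro in_span_std_word upt_append_in_sym_nf) auto
    moreover have "xmono (replicate n 0) @ map T ([a..<Suc m] @ u') @ [E \<nu>] = T a # map T u @ [E \<nu>]"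
      using std u Suc.prems by (simp add: xmono_replicate_0 upt_conv_Cons)
    ultimately show ?thesis by metis
  next
    case square
    then show ?thesis using in_span_T_cycle_square[OF _ u(2) _ u(4) Suc.prems(5)] Suc.prems u(1)
      by simp
  next
    case braid
    then have "word_sim Rs (T a # map T u @ [E \<nu>])
        (map T [k..<Suc m] @ T (a - 1) # map T u' @ [E \<nu>])"
      using word_sim_T_past_cycle[OF u(2) braid _ _ valid Suc.prems(5)] Suc.prems u(1) by simp
    moreover have "1 \<le> a - 1" "a - 1 < m" using braid u(2) Suc.prems(4) by auto
    ultimately show ?thesis using in_span_mod_word_sim cycle_then_T by blast
  qed
qed simp

lemma in_span_T_std_word:
  assumes "\<nu> \<in> Ib" "b \<in> std_words n \<nu>" "1 \<le> a" "a + 1 \<le> n"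
  shows "in_span_mod Rs (std_words n \<nu>) (fa_word (T a # b))"
proof -
  obtain ts u where b: "b = xmono ts @ map T u @ [E \<nu>]" "length ts = n" "u \<in> sym_nf n"
    using assms(2) by (auto simp: std_words_def)
  obtain ys where ys: "x_word ys"
    "word_sim Rs (T a # xmono ts @ map T u @ [E \<nu>]) (ys @ T a # map T u @ [E \<nu>])"
    using word_sim_T_past_x_word[OF x_word_xmono valid_sym_nf[OF b(3)] assms(1)] b(2) assms(3,4)
      by auto
  have "in_span_mod Rs (std_words n \<nu>) (fa_word (ys @ (T a # map T u @ [E \<nu>]) @ []))"
  proof (rule in_span_mod_word_wrap)
    show "in_span_mod Rs (std_words n \<nu>) (fa_word (T a # map T u @ [E \<nu>]))"
      using in_span_T_std[OF _ b(3) assms(3) _ assms(1)] assms(4) by simp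
  next
    fix b' assume "b' \<in> std_words n \<nu>"
    then show "in_span_mod Rs (std_words n \<nu>) (fa_word (ys @ b' @ []))"
      using in_span_x_word_std[OF ys(1) _ _ _ assms(1)] by (auto simp: std_words_def)
  qed
  then show ?thesis using in_span_mod_word_sim[OF ys(2)] b(1) by simp
qed

lemma in_span_gen_std_word:
  assumes "\<nu> \<in> Ib" "b \<in> std_words n \<nu>"
  shows "in_span_mod Rs (std_words n \<nu>) (fa_word (g # b))"
proof -
  obtain ts u where b: "b = xmono ts @ map T u @ [E \<nu>]" "length ts = n" "u \<in> sym_nf n"
    using assms(2) by (auto simp: std_words_def)
  have valid: "list_all valid_gen (xmono ts @ map T u)"
    using x_word_valid[OF x_word_xmono] valid_sym_nf[OF b(3)] b(2) by simp
  have vanishing: "in_span_mod Rs (std_words n \<nu>) (fa_word (g # b))" if "word_vanishes Rs [g]"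
    using in_span_mod_vanishing word_vanishes_wrap[OF that, of "[]" b] by simp
  show ?thesis
  proof (cases g)
    case (E \<mu>)
    show ?thesis
    proof (cases "\<mu> = word_perm (xmono ts @ map T u) \<nu>")
      case True
      have "in_span_mod Rs (std_words n \<nu>) (fa_word b)" using assms(2) by (rule in_span_mod_word)
      then show ?thesis
        using in_span_mod_word_sim[OF word_sim_absorb_E[OF valid assms(1) True]] E b(1)
        by simp
    next
      case False
      then show ?thesis
        using word_vanishes_wrong_E[OF valid assms(1) False] E b(1)
          by (simp add: in_span_mod_vanishing)
    qed
  next
    case (X p)
    then show ?thesis
      using in_span_x_word_std[of "[X p]", OF _ b(2,3) le_refl assms(1)] b(1)
        vanishing word_vanishes_X_outside[of p] by (cases "p \<in> {1..n}") auto
  next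
    case (T a)
    then show ?thesis
      using in_span_T_std_word[OF assms] vanishing word_vanishes_T_outside[of a] by blast
  qed
qed

lemma in_span_std_words: "\<nu> \<in> Ib \<Longrightarrow> in_span_mod Rs (std_words n \<nu>) (fa_word (w @ [E \<nu>]))"
proof (induction w)
  case Nil
  then show ?case
    using in_span_std_word[of "replicate n 0" "[]" n \<nu>] Nil_in_sym_nf
      by (simp add: xmono_replicate_0)
next
  case (Cons g w)
  then show ?case
    using in_span_mod_word_wrap[of Rs "std_words n \<nu>" "w @ [E \<nu>]" _ "[g]" "[]"] in_span_gen_std_word
    by simp
qed

definition diag_words :: "'i gen list set" where
  "diag_words = (\<lambda>(\<mu>, ts). xmono ts @ [E \<mu>]) ` {(\<mu>, ts). \<mu> \<in> Ib \<and> length ts = n}"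

text \<open>Here multiplicity-freeness enters: \<open>e(\<nu>) x\<^sup>t T\<^sub>u e(\<nu>)\<close> vanishes unless
  \<open>u\<close> fixes \<open>\<nu>\<close>, and only the empty normal word fixes a sequence without repetitions.\<close>
lemma in_span_diag_E_std_word:
  assumes "\<nu> \<in> Ib" "b \<in> std_words n \<nu>"
  shows "in_span_mod Rs diag_words (fa_word (E \<nu> # b))"
proof -
  obtain ts u where b: "b = xmono ts @ map T u @ [E \<nu>]" "length ts = n" "u \<in> sym_nf n"
    using assms(2) by (auto simp: std_words_def)
  have valid: "list_all valid_gen (xmono ts @ map T u)"
    using x_word_valid[OF x_word_xmono] valid_sym_nf[OF b(3)] b(2) by simp
  show ?thesis
  proof (cases "\<nu> = word_perm (xmono ts @ map T u) \<nu>")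
    case True
    then have "word_perm (map T u) \<nu> = \<nu>" using word_perm_x_word[OF x_word_xmono] b(2) by simp
    then have "u = []"
      using sym_nf_fixes_distinct[OF b(3), of \<nu>] Ib_length[OF assms(1)] Ib_distinct[OF assms(1)]
        by simp
    moreover have "xmono ts @ [E \<nu>] \<in> diag_words" using b(2) assms(1) by (auto simp: diag_words_def)
    ultimately have "in_span_mod Rs diag_words (fa_word ((xmono ts @ map T u) @ [E \<nu>]))"
      by (simp add: in_span_mod_word)
    then show ?thesis
      using in_span_mod_word_sim[OF word_sim_absorb_E[OF valid assms(1) True]] b(1) by simp
  next
    case False
    then show ?thesis
      using word_vanishes_wrong_E[OF valid assms(1) False] b(1) by (simp add: in_span_mod_vanishing)
  qed
qed

lemma in_span_diag_sandwich: "\<nu> \<in> Ib \<Longrightarrow> in_span_mod Rs diag_words (fa_word (E \<nu> # w @ [E \<nu>]))"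
  using in_span_mod_word_wrap[OF in_span_std_words[of \<nu> w], of diag_words "[E \<nu>]" "[]"]
    in_span_diag_E_std_word by simp

lemma fa_cong_sum_E_right: "fin_supp z \<Longrightarrow> fa_cong Rs z (fa_sum Ib (\<lambda>\<nu>. fa_wrap [] [E \<nu>] z))"
  using fa_cong_mul_left[OF _ fa_cong_sum_E, of z]
  by (simp add: fa_mul_sum_right fa_mul_word_eq_wrap fa_wrap_Nil)

lemma central_fa_cong_sandwich:
  assumes "in_center Rs z" "\<nu> \<in> Ib"
  shows "fa_cong Rs (fa_wrap [] [E \<nu>] z) (fa_wrap [E \<nu>] [E \<nu>] z)"
proof -
  have z: "fin_supp z" using assms(1) by (simp add: in_center_def)
  have "fa_cong Rs (fa_word [E \<nu>]) (fa_word [E \<nu>, E \<nu>])"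
    using fa_cong_sym[OF fa_cong_rel[OF rel_EE[OF assms(2) assms(2)]]] by simp
  then have "fa_cong Rs (fa_mul z (fa_word [E \<nu>])) (fa_mul z (fa_word [E \<nu>, E \<nu>]))"
    by (rule fa_cong_mul_left[OF z])
  then have "fa_cong Rs (fa_wrap [] [E \<nu>] z) (fa_wrap [] [E \<nu>] (fa_wrap [] [E \<nu>] z))"
    by (simp add: fa_mul_word_eq_wrap fa_wrap_wrap)
  also have "fa_cong Rs \<dots> (fa_wrap [] [E \<nu>] (fa_wrap [E \<nu>] [] z))"
    by (rule fa_cong_wrap, rule fa_cong_sym, rule in_center_commutes_word[OF assms(1)])
  also have "\<dots> = fa_wrap [E \<nu>] [E \<nu>] z"
    by (simp add: fa_wrap_wrap)
  finally show ?thesis .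
qed

lemma central_in_span_diag:
  assumes "in_center Rs z"
  shows "in_span_mod Rs diag_words z"
proof -
  have z: "fin_supp z" using assms by (simp add: in_center_def)
  have "in_span_mod Rs diag_words (fa_wrap [E \<nu>] [E \<nu>] z)" if "\<nu> \<in> Ib" for \<nu>
    unfolding fa_wrap_eq_sum_words[OF z]
    using in_span_diag_sandwich[OF that] by (auto intro: in_span_mod_sum in_span_mod_smul)
  then have "in_span_mod Rs diag_words (fa_sum Ib (\<lambda>\<nu>. fa_wrap [] [E \<nu>] z))"
    using central_fa_cong_sandwich[OF assms] by (auto intro: in_span_mod_sum in_span_mod_cong)
  then show ?thesis using fa_cong_sum_E_right[OF z] in_span_mod_cong by blast
qed

lemma central_diag_combination:
  assumes "in_center Rs z"
  shows "\<exists>S c. finite S \<and> S \<subseteq> {(\<mu>, ts). \<mu> \<in> Ib \<and> length ts = n} \<and>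
    fa_sub z (fa_sum S (\<lambda>(\<mu>, ts). fa_smul (c (\<mu>, ts)) (fa_word (xmono ts @ [E \<mu>])))) \<in> ideal_gen Rs"
proof -
  obtain g where g: "g \<in> fa_span diag_words" "fa_cong Rs z g"
    using central_in_span_diag[OF assms] unfolding in_span_mod_def by blast
  obtain S c where S: "finite S" "S \<subseteq> {(\<mu>, ts). \<mu> \<in> Ib \<and> length ts = n}"
    "g = fa_sum S (\<lambda>x. fa_smul (c x) (fa_word ((\<lambda>(\<mu>, ts). xmono ts @ [E \<mu>]) x)))"
    using fa_span_imageE[OF g(1)[unfolded diag_words_def]] by blast
  have "g = fa_sum S (\<lambda>(\<mu>, ts). fa_smul (c (\<mu>, ts)) (fa_word (xmono ts @ [E \<mu>])))"
    unfolding S(3) by (simp add: case_prod_unfold)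
  with S(1,2) g(2) show ?thesis
    unfolding fa_cong_def by (intro exI[of _ S] exI[of _ c] conjI) simp_all
qed

end

section \<open>Sequences with the same root sum\<close>

lemma sum_lessThan_add_const:
  fixes p q :: nat and x :: "'p::ab_group_add"
  shows "(\<Sum>_<p + q. x) = (\<Sum>_<p. x) + (\<Sum>_<q. x)"
  by (induction q) (auto simp: add.assoc)

lemma zsc_of_nat_diff: "zsc (int a - int b) (x::'p::ab_group_add) = (\<Sum>_<a. x) - (\<Sum>_<b. x)"
proof (cases "b \<le> a")
  case True
  then show ?thesis
    using sum_lessThan_add_const[where p = b and q = "a - b" and x = x]
      by (simp add: zsc_def nat_diff_distrib)
next
  case False
  then show ?thesis
    using sum_lessThan_add_const[where p = a and q = "b - a" and x = x]
      by (simp add: zsc_def nat_diff_distrib)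
qed

lemma sum_list_map_eq_sum_count_list:
  fixes \<alpha> :: "'i \<Rightarrow> 'p::ab_group_add"
  assumes "finite F" "set xs \<subseteq> F"
  shows "sum_list (map \<alpha> xs) = (\<Sum>i\<in>F. \<Sum>_<count_list xs i. \<alpha> i)"
  using assms(2)
proof (induction xs)
  case (Cons x xs)
  have "(\<Sum>i\<in>F. \<Sum>_<count_list (x # xs) i. \<alpha> i)
      = (\<Sum>i\<in>F. (\<Sum>_<count_list xs i. \<alpha> i) + (if x = i then \<alpha> i else 0))"
    by (rule sum.cong) auto
  also have "\<dots> = (\<Sum>i\<in>F. \<Sum>_<count_list xs i. \<alpha> i) + \<alpha> x"
    using Cons.prems assms(1) by (simp add: sum.distrib sum.delta)
  finally show ?case using Cons by (simp add: add.commute)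
qed simp

lemma mset_eq_if_sum_list_eq:
  fixes \<alpha> :: "'i \<Rightarrow> 'p::ab_group_add"
  assumes indep: "\<And>F c. finite F \<Longrightarrow> (\<Sum>i\<in>F. zsc (c i) (\<alpha> i)) = 0 \<Longrightarrow> \<forall>i\<in>F. c i = 0"
    and eq: "sum_list (map \<alpha> xs) = sum_list (map \<alpha> ys)"
  shows "mset xs = mset ys"
proof (rule multiset_eqI)
  fix i
  define F where "F = set xs \<union> set ys"
  have "finite F" by (simp add: F_def)
  have "(\<Sum>i\<in>F. zsc (int (count_list xs i) - int (count_list ys i)) (\<alpha> i)) = 0"
    using eq sum_list_map_eq_sum_count_list[OF \<open>finite F\<close>, of xs \<alpha>]
      sum_list_map_eq_sum_count_list[OF \<open>finite F\<close>, of ys \<alpha>]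
    by (simp add: F_def zsc_of_nat_diff sum_subtractf)
  then have "\<forall>i\<in>F. count_list xs i = count_list ys i"
    using indep[OF \<open>finite F\<close>, of "\<lambda>i. int (count_list xs i) - int (count_list ys i)"] by simp
  then show "count (mset xs) i = count (mset ys) i"
    by (cases "i \<in> F") (auto simp: count_mset F_def)
qed

lemma mset_swp: "1 \<le> a \<Longrightarrow> a < length \<nu> \<Longrightarrow> mset (swp a \<nu>) = mset \<nu>"
  unfolding swp_def by (rule mset_swap) auto

lemma multiplicity_free_klr_root_sums:
  fixes \<alpha> :: "'i \<Rightarrow> 'p::ab_group_add"
  assumes indep: "\<And>F c. finite F \<Longrightarrow> (\<Sum>i\<in>F. zsc (c i) (\<alpha> i)) = 0 \<Longrightarrow> \<forall>i\<in>F. c i = 0"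
    and "distinct js"
  shows "multiplicity_free_klr (length js)
    {\<nu>. length \<nu> = length js \<and> sum_list (map \<alpha> \<nu>) = sum_list (map \<alpha> js)}"
    (is "multiplicity_free_klr _ ?Ib")
proof
  fix \<nu> a assume \<nu>: "\<nu> \<in> ?Ib"
  then show "length \<nu> = length js" by simp
  have "mset \<nu> = mset js"
    using mset_eq_if_sum_list_eq[where \<alpha> = \<alpha> and xs = \<nu> and ys = js, OF indep] \<nu> by simp
  then show "distinct \<nu>" using mset_eq_imp_distinct_iff[of \<nu> js] assms(2) by simp
  assume "1 \<le> a" "a + 1 \<le> length js"
  then have "mset (swp a \<nu>) = mset \<nu>" using \<nu> by (intro mset_swp) auto
  then have "sum_list (map \<alpha> (swp a \<nu>)) = sum_list (map \<alpha> \<nu>)"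
    by (metis mset_map sum_mset_sum_list)
  then show "swp a \<nu> \<in> ?Ib" using \<nu> by simp
qed

theorem lemma5p5:
  fixes A :: "'i \<Rightarrow> 'i \<Rightarrow> int" and d :: "'i \<Rightarrow> int"
    and \<alpha> :: "'i \<Rightarrow> 'p::ab_group_add" and h :: "'i \<Rightarrow> 'p \<Rightarrow> int"
    and form :: "'p \<Rightarrow> 'p \<Rightarrow> int" and podd :: "'i \<Rightarrow> bool"
    and t :: "'i \<Rightarrow> 'i \<Rightarrow> nat \<Rightarrow> nat \<Rightarrow> 'k::field"
    and \<Lambda> :: 'p and js :: "'i list" and z :: "'i gen list \<Rightarrow> 'k"
  assumes char: "(2::'k) \<noteq> 0"
    and cartan_diag: "\<And>i. A i i = 2"
    and cartan_off: "\<And>i j. i \<noteq> j \<Longrightarrow> A i j \<le> 0"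
    and cartan_zero: "\<And>i j. A i j = 0 \<longleftrightarrow> A j i = 0"
    and d_pos: "\<And>i. d i > 0"
    and symm: "\<And>i j. d i * A i j = d j * A j i"
    and alpha_indep: "\<And>F c. finite F \<Longrightarrow> (\<Sum>i\<in>F. zsc (c i) (\<alpha> i)) = 0 \<Longrightarrow> \<forall>i\<in>F. c i = 0"
    and h_add: "\<And>i x y. h i (x + y) = h i x + h i y"
    and h_alpha: "\<And>i j. h i (\<alpha> j) = A i j"
    and odd_even: "\<And>i j. podd i \<Longrightarrow> even (A i j)"
    and form_sym: "\<And>x y. form x y = form y x"
    and form_add: "\<And>x y w. form (x + y) w = form x w + form y w"
    and form_alpha: "\<And>i x. form (\<alpha> i) x = d i * h i x"
    and t_deg: "\<And>i j r s. t i j r s \<noteq> 0 \<Longrightarrow>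
        - 2 * form (\<alpha> i) (\<alpha> j) - int r * form (\<alpha> i) (\<alpha> i) - int s * form (\<alpha> j) (\<alpha> j) = 0"
    and t_sym: "\<And>i j r s. t i j r s = t j i s r"
    and t_unit: "\<And>i j. i \<noteq> j \<Longrightarrow> t i j (nat (- A i j)) 0 \<noteq> 0"
    and t_diag: "\<And>i r s. t i i r s = 0"
    and t_odd: "\<And>i j r s. podd i \<Longrightarrow> odd r \<Longrightarrow> t i j r s = 0"
    and dominant: "\<And>i. h i \<Lambda> \<ge> 0"
    and distinct_js: "distinct js"
    and central: "in_center
        (cyc_rels podd t (length js)
           {\<nu>. length \<nu> = length js \<and> sum_list (map \<alpha> \<nu>) = sum_list (map \<alpha> js)}
           (\<lambda>i. nat (h i \<Lambda>))) z"
  shows "\<exists>S c. finite S \<and>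
     S \<subseteq> {(\<mu>, ts). length \<mu> = length js \<and> sum_list (map \<alpha> \<mu>) = sum_list (map \<alpha> js)
                  \<and> length ts = length js} \<and>
     fa_sub z (fa_sum S (\<lambda>(\<mu>, ts). fa_smul (c (\<mu>, ts)) (fa_word (xmono ts @ [E \<mu>]))))
       \<in> ideal_gen (cyc_rels podd t (length js)
           {\<nu>. length \<nu> = length js \<and> sum_list (map \<alpha> \<nu>) = sum_list (map \<alpha> js)}
           (\<lambda>i. nat (h i \<Lambda>)))"
proof -
  interpret multiplicity_free_klr podd t "length js"
    "{\<nu>. length \<nu> = length js \<and> sum_list (map \<alpha> \<nu>) = sum_list (map \<alpha> js)}" "\<lambda>i. nat (h i \<Lambda>)"
    using multiplicity_free_klr_root_sums[where \<alpha> = \<alpha>, OF alpha_indep distinct_js] .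
  show ?thesis using central_diag_combination[OF central] by (simp add: conj_assoc)
qed

end
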